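(* Let $d\in\mathbb{N}$, let $P$ be a stationary and ergodic probability measure on $\Omega=[0,1]^{\mathcal{K}^d}$, fix an integer $0\le q<d$ and $t\in[0,1]$, and let $\widehat\beta_q(t)$ be the non-random constant such that $|\Lambda_n|^{-1}\beta_q^n(t)\to\widehat\beta_q(t)$ almost surely. If there exists a positive integer $K$ with $P(\Omega_q(0,K,t))>0$, then $\widehat\beta_q(t)>0$.
   Context: An elementary interval is $[l,l+1]$ or $[l]=[l,l]$ with $l\in\mathbb{Z}$; an elementary cube in $\mathbb{R}^d$ is a product of $d$ elementary intervals, of dimension equal to the number of nondegenerate factors; $\mathcal{K}^d$ is the set of all elementary cubes. A cubical set is a union of elementary cubes. For a cubical set $X$, $C_k(X)$ is the free $\mathbb{Z}$-module on the $k$-dimensional elementary cubes contained in $X$ with the standard cubical boundary operator; $H_k(X)$ is the resulting homology and, for bounded $X$, $\beta_k(X)$ is the rank of the free part of $H_k(X)$. $\Omega=[0,1]^{\mathcal{K}^d}$ with product topology and Borel $\sigma$-field, $\omega=(\omega_Q)_{Q\in\mathcal{K}^d}$; $\tau_x\omega=(\omega_{-x+Q})_Q$ for $x\in\mathbb{Z}^d$; stationarity: $P\circ\tau_x^{-1}=P$ for all $x$; ergodicity: translation-invariant events have probability $0$ or $1$. $X(t)=\bigcup\{Q:\omega_Q\le t\}$, $\Lambda_n=[-n,n]^d$, $X^n(t)=X(t)\cap\Lambda_n$, $\beta_q^n(t)=\beta_q(X^n(t))$, $|\Lambda_n|=(2n)^d$. For $x\in\mathbb{Z}^d$ and $K\in\mathbb{N}$,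 let $\mathcal{L}_{x,K}=\{Q\in\mathcal{K}^d:Q\subset x+\Lambda_K\}$. For a finite $\mathcal{L}\subset\mathcal{K}^d$ with $\mathcal{L}_{x,K}\subset\mathcal{L}$, set $X_{\mathcal{L}}(t)=\bigcup\{Q\in\mathcal{L}:\omega_Q\le t\}$ and $X^{x,K}_{\mathcal{L}}(t)=\bigcup\{Q\in\mathcal{L}\setminus\mathcal{L}_{x,K}:\omega_Q\le t\}$. $\Omega_q(x,K,t)\subset\Omega$ is the set of configurations $\omega$ such that $\beta_q(X_{\mathcal{L}}(t))\ge 1+\beta_q(X^{x,K}_{\mathcal{L}}(t))$ for every finite $\mathcal{L}\subset\mathcal{K}^d$ with $\mathcal{L}_{x,K}\subset\mathcal{L}$. *)

theory Defs
  imports "HOL-Probability.Probability"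
begin

text \<open>An elementary interval is encoded as a pair (l, b): (l, True) is [l, l+1],
  (l, False) is the degenerate interval [l] = [l, l]. An elementary cube in R^d
  is a list of d elementary intervals. Points of R^d are functions nat => real
  which vanish at coordinates i >= d.\<close>

type_synonym cube = "(int \<times> bool) list"

definition cubesK :: "nat \<Rightarrow> cube set" where
  "cubesK d = {Q. length Q = d}"

definition cube_dim :: "cube \<Rightarrow> nat" where
  "cube_dim Q = length (filter snd Q)"

definition cube_set :: "cube \<Rightarrow> (nat \<Rightarrow> real) set" where
  "cube_set Q = {p. (\<forall>i<length Q. real_of_int (fst (Q!i)) \<le> p i \<and>
                        p i \<le> real_of_int (fst (Q!i)) + (if snd (Q!i) then 1 else 0))
                  \<and> (\<forall>i. length Q \<le> i \<longrightarrow> p i = 0)}"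

definition elem_cubes :: "nat \<Rightarrow> nat \<Rightarrow> (nat \<Rightarrow> real) set \<Rightarrow> cube set" where
  "elem_cubes d k X = {Q \<in> cubesK d. cube_dim Q = k \<and> cube_set Q \<subseteq> X}"

definition chains :: "nat \<Rightarrow> nat \<Rightarrow> (nat \<Rightarrow> real) set \<Rightarrow> (cube \<Rightarrow> int) set" where
  "chains d k X = {c. finite {Q. c Q \<noteq> 0} \<and> (\<forall>Q. c Q \<noteq> 0 \<longrightarrow> Q \<in> elem_cubes d k X)}"

text \<open>Coefficient of the face P in the cubical boundary of the elementary cube Q:
  the boundary of Q = I_1 x ... x I_d is the sum over nondegenerate I_i = [l,l+1]
  of (-1)^(number of nondegenerate I_j, j < i) times
  (Q with I_i replaced by [l+1]) - (Q with I_i replaced by [l]).\<close>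
definition bd_coeff :: "cube \<Rightarrow> cube \<Rightarrow> int" where
  "bd_coeff Q P = (\<Sum>i<length Q. if snd (Q!i) then
      (-1) ^ length (filter snd (take i Q)) *
      ((if P = Q[i := (fst (Q!i) + 1, False)] then 1 else 0)
       - (if P = Q[i := (fst (Q!i), False)] then 1 else 0))
    else 0)"

definition boundary :: "(cube \<Rightarrow> int) \<Rightarrow> (cube \<Rightarrow> int)" where
  "boundary c = (\<lambda>P. \<Sum>Q\<in>{Q. c Q \<noteq> 0}. c Q * bd_coeff Q P)"

definition cycles :: "nat \<Rightarrow> nat \<Rightarrow> (nat \<Rightarrow> real) set \<Rightarrow> (cube \<Rightarrow> int) set" where
  "cycles d k X = {c \<in> chains d k X. boundary c = (\<lambda>_. 0)}"

definition bdries :: "nat \<Rightarrow> nat \<Rightarrow> (nat \<Rightarrow> real) set \<Rightarrow> (cube \<Rightarrow> int) set" where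
  "bdries d k X = boundary ` chains d (Suc k) X"

text \<open>beta_k(X): rank of the free part of H_k(X) = Z_k(X)/B_k(X), i.e. the maximal
  number of elements of Z_k(X) that are Z-linearly independent modulo B_k(X).\<close>
definition betti :: "nat \<Rightarrow> nat \<Rightarrow> (nat \<Rightarrow> real) set \<Rightarrow> nat" where
  "betti d k X = Sup {card S | S. finite S \<and> S \<subseteq> cycles d k X \<and>
      (\<forall>a :: (cube \<Rightarrow> int) \<Rightarrow> int.
         (\<lambda>Q. \<Sum>s\<in>S. a s * s Q) \<in> bdries d k X \<longrightarrow> (\<forall>s\<in>S. a s = 0))}"

definition box :: "nat \<Rightarrow> int list \<Rightarrow> nat \<Rightarrow> (nat \<Rightarrow> real) set" where
  "box d x K = {p. (\<forall>i<d. real_of_int (x!i) - real K \<le> p i \<and> p i \<le> real_of_int (x!i) + real K)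
                  \<and> (\<forall>i. d \<le> i \<longrightarrow> p i = 0)}"

definition Lambda :: "nat \<Rightarrow> nat \<Rightarrow> (nat \<Rightarrow> real) set" where
  "Lambda d n = box d (replicate d 0) n"

definition OmegaM :: "nat \<Rightarrow> (cube \<Rightarrow> real) measure" where
  "OmegaM d = (\<Pi>\<^sub>M Q\<in>cubesK d. restrict_space borel {0..1::real})"

definition shift_cube :: "int list \<Rightarrow> cube \<Rightarrow> cube" where
  "shift_cube x Q = map2 (\<lambda>(l, b) xi. (l + xi, b)) Q x"

definition tau :: "nat \<Rightarrow> int list \<Rightarrow> (cube \<Rightarrow> real) \<Rightarrow> (cube \<Rightarrow> real)" where
  "tau d x \<omega> = (\<lambda>Q\<in>cubesK d. \<omega> (shift_cube (map uminus x) Q))"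

definition Xt :: "nat \<Rightarrow> (cube \<Rightarrow> real) \<Rightarrow> real \<Rightarrow> (nat \<Rightarrow> real) set" where
  "Xt d \<omega> t = \<Union> {cube_set Q | Q. Q \<in> cubesK d \<and> \<omega> Q \<le> t}"

definition XL :: "cube set \<Rightarrow> (cube \<Rightarrow> real) \<Rightarrow> real \<Rightarrow> (nat \<Rightarrow> real) set" where
  "XL L \<omega> t = \<Union> {cube_set Q | Q. Q \<in> L \<and> \<omega> Q \<le> t}"

definition Lbox :: "nat \<Rightarrow> int list \<Rightarrow> nat \<Rightarrow> cube set" where
  "Lbox d x K = {Q \<in> cubesK d. cube_set Q \<subseteq> box d x K}"

definition Omega_q :: "nat \<Rightarrow> nat \<Rightarrow> int list \<Rightarrow> nat \<Rightarrow> real \<Rightarrow> (cube \<Rightarrow> real) set" where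
  "Omega_q d q x K t = {\<omega> \<in> space (OmegaM d). \<forall>L. finite L \<and> L \<subseteq> cubesK d \<and> Lbox d x K \<subseteq> L \<longrightarrow>
       1 + betti d q (XL (L - Lbox d x K) \<omega> t) \<le> betti d q (XL L \<omega> t)}"

end

theory Submission
  imports Defs
begin

text \<open>
  Fix \<open>K\<close>, let \<open>p = P(\<Omega>\<^sub>q(0,K,t)) > 0\<close> and cut \<open>\<Lambda>\<^sub>n\<close>, \<open>n = (2K+1)M\<close>, into \<open>M\<^sup>d\<close> disjoint
  translates \<open>x + \<Lambda>\<^sub>K\<close>. Call such a box pivotal if deleting its cubes lowers \<open>\<beta>\<^sub>q\<close> by at least
  one, whatever the surrounding finite complex. Deleting the pivotal boxes of \<open>\<Lambda>\<^sub>n\<close> one after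
  the other shows that \<open>\<beta>\<^sub>q\<close> of the complex of cubes of \<open>X(t)\<close> inside \<open>\<Lambda>\<^sub>n\<close> is at least the
  number of pivotal boxes. Passing to \<open>X(t) \<inter> \<Lambda>\<^sub>n\<close> only adds faces lying on \<open>\<partial>\<Lambda>\<^sub>n\<close>, and each
  added \<open>(q+1)\<close>-cell lowers \<open>\<beta>\<^sub>q\<close> by at most one, which costs \<open>O(n ^ (d - 1))\<close>.

  By stationarity each box is pivotal with probability \<open>p\<close>, so the expected number of pivotal
  boxes is \<open>p M\<^sup>d\<close>; a reverse Markov inequality shows that with probability at least \<open>p/2\<close>
  there are at least \<open>p M\<^sup>d/2\<close> of them for infinitely many \<open>M\<close>. On this event of positive
  probability \<open>\<beta>\<^sub>q\<^sup>n(t) \<ge> c n\<^sup>d\<close> along a subsequence, so the almost sure limit is positive.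
\<close>

section \<open>Linear independence over \<open>\<int>\<close> modulo a submodule\<close>

definition indep_mod :: "('c \<Rightarrow> int) set \<Rightarrow> ('c \<Rightarrow> int) set \<Rightarrow> bool" where
  "indep_mod B S \<longleftrightarrow> (\<forall>a :: ('c \<Rightarrow> int) \<Rightarrow> int. (\<lambda>Q. \<Sum>s\<in>S. a s * s Q) \<in> B \<longrightarrow> (\<forall>s\<in>S. a s = 0))"

lemma indep_modD: "indep_mod B S \<Longrightarrow> (\<lambda>Q. \<Sum>s\<in>S. a s * s Q) \<in> B \<Longrightarrow> s \<in> S \<Longrightarrow> a s = 0"
  unfolding indep_mod_def by blast

lemma indep_mod_anti_mono: "B' \<subseteq> B \<Longrightarrow> indep_mod B S \<Longrightarrow> indep_mod B' S"
  unfolding indep_mod_def by blast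

definition eliminate :: "('c \<Rightarrow> int) \<Rightarrow> 'c \<Rightarrow> ('c \<Rightarrow> int) \<Rightarrow> ('c \<Rightarrow> int)" where
  "eliminate s0 e s = (\<lambda>Q. s0 e * s Q - s e * s0 Q)"

lemma inj_on_eliminate:
  assumes ind: "indep_mod {\<lambda>_. 0} S" and fin: "finite S" and s0: "s0 \<in> S" "s0 e \<noteq> 0"
  shows "inj_on (eliminate s0 e) (S - {s0})"
proof
  fix s s' assume s: "s \<in> S - {s0}" and s': "s' \<in> S - {s0}" and eq: "eliminate s0 e s = eliminate s0 e s'"
  show "s = s'"
  proof (rule ccontr)
    assume ne: "s \<noteq> s'"
    define a where "a u = (if u = s then s0 e else if u = s' then - s0 e else if u = s0 then s' e - s e else 0)" for u
    have "(\<Sum>u\<in>S. a u * u Q) = 0" for Q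
    proof -
      have "(\<Sum>u\<in>S. a u * u Q) = (\<Sum>u\<in>{s, s', s0}. a u * u Q)"
        using s s' s0 fin by (intro sum.mono_neutral_right) (auto simp: a_def)
      also have "\<dots> = eliminate s0 e s Q - eliminate s0 e s' Q"
      proof -
        have "s \<noteq> s0" "s' \<noteq> s0" "s' \<noteq> s" using s s' ne by auto
        then show ?thesis using ne by (simp add: a_def eliminate_def algebra_simps)
      qed
      finally show ?thesis using eq by simp
    qed
    then have "a s = 0" using indep_modD[OF ind, of a s] s by simp
    then show False using s0 by (simp add: a_def)
  qed
qed

lemma indep_mod_zero_eliminate:
  assumes ind: "indep_mod {\<lambda>_. 0} S" and fin: "finite S" and s0: "s0 \<in> S" "s0 e \<noteq> 0"
  shows "indep_mod {\<lambda>_. 0} (eliminate s0 e ` (S - {s0}))"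
  unfolding indep_mod_def
proof (intro allI impI ballI)
  fix a' u
  assume h: "(\<lambda>Q. \<Sum>s\<in>eliminate s0 e ` (S - {s0}). a' s * s Q) \<in> {\<lambda>_. 0}"
    and u: "u \<in> eliminate s0 e ` (S - {s0})"
  define a where "a s = (if s = s0 then - (\<Sum>v\<in>S - {s0}. a' (eliminate s0 e v) * v e)
                         else a' (eliminate s0 e s) * s0 e)" for s
  have "(\<Sum>s\<in>S. a s * s Q) = (\<Sum>s\<in>eliminate s0 e ` (S - {s0}). a' s * s Q)" for Q
  proof -
    have "(\<Sum>s\<in>S. a s * s Q) = a s0 * s0 Q + (\<Sum>s\<in>S - {s0}. a' (eliminate s0 e s) * s0 e * s Q)"
      using s0 fin by (simp add: sum.remove a_def)
    also have "\<dots> = (\<Sum>s\<in>S - {s0}. a' (eliminate s0 e s) * eliminate s0 e s Q)"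
      by (simp add: a_def eliminate_def sum_subtractf sum_distrib_right right_diff_distrib
          mult.assoc mult.left_commute)
    also have "\<dots> = (\<Sum>s\<in>eliminate s0 e ` (S - {s0}). a' s * s Q)"
      using inj_on_eliminate[OF ind fin s0] by (simp add: sum.reindex)
    finally show ?thesis .
  qed
  then have "(\<lambda>Q. \<Sum>s\<in>S. a s * s Q) \<in> {\<lambda>_. 0}" using h by simp
  then have "\<forall>s\<in>S. a s = 0" using indep_modD[OF ind] by blast
  moreover obtain v where "v \<in> S - {s0}" "u = eliminate s0 e v" using u by auto
  ultimately show "a' u = 0" using s0 by (auto simp: a_def)
qed

lemma card_indep_le_card_support:
  assumes "finite E"
  shows "finite S \<Longrightarrow> (\<forall>s\<in>S. \<forall>Q. s Q \<noteq> 0 \<longrightarrow> Q \<in> E) \<Longrightarrow> indep_mod {\<lambda>_. 0} S \<Longrightarrow> card S \<le> card E"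
  using assms
proof (induction E arbitrary: S rule: finite_induct)
  case empty
  then have "S \<subseteq> {\<lambda>_. 0}" by auto
  moreover have "(\<lambda>_. 0) \<notin> S"
  proof
    assume "(\<lambda>_. 0) \<in> S"
    moreover have "(\<lambda>Q. \<Sum>s\<in>S. 1 * s Q) = (\<lambda>_. 0)" using empty.prems(2) by (auto intro!: sum.neutral)
    ultimately show False using indep_modD[OF empty(3), of "\<lambda>_. 1" "\<lambda>_. 0"] by simp
  qed
  ultimately have "S = {}" by blast
  then show ?case by simp
next
  case (insert e E)
  show ?case
  proof (cases "\<forall>s\<in>S. s e = 0")
    case True
    then have "\<forall>s\<in>S. \<forall>Q. s Q \<noteq> 0 \<longrightarrow> Q \<in> E" using insert.prems(2) by blast
    then have "card S \<le> card E" using insert.IH insert.prems(1,3) by blast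
    then show ?thesis using insert by simp
  next
    case False
    then obtain s0 where s0: "s0 \<in> S" "s0 e \<noteq> 0" by auto
    have "\<forall>u\<in>eliminate s0 e ` (S - {s0}). \<forall>Q. u Q \<noteq> 0 \<longrightarrow> Q \<in> E"
    proof (intro ballI allI impI)
      fix u Q assume u: "u \<in> eliminate s0 e ` (S - {s0})" "u Q \<noteq> 0"
      then obtain s where s: "s \<in> S" "u = eliminate s0 e s" by blast
      then have "Q \<noteq> e" "s Q \<noteq> 0 \<or> s0 Q \<noteq> 0" using u(2) by (auto simp: eliminate_def)
      then show "Q \<in> E" using insert.prems(2) s(1) s0(1) by blast
    qed
    then have "card (eliminate s0 e ` (S - {s0})) \<le> card E"
      using insert.IH[OF _ _ indep_mod_zero_eliminate[OF insert.prems(3,1) s0]] insert.prems(1) by blast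
    then have "card (S - {s0}) \<le> card E"
      using card_image[OF inj_on_eliminate[OF insert.prems(3,1) s0]] by simp
    then show ?thesis using s0 insert.prems(1) insert.hyps by (simp add: card_Diff_singleton)
  qed
qed

lemma indep_mod_subset:
  assumes ind: "indep_mod B S" and sub: "S' \<subseteq> S" and fin: "finite S"
  shows "indep_mod B S'"
  unfolding indep_mod_def
proof (intro allI impI ballI)
  fix a' s assume rel: "(\<lambda>Q. \<Sum>s\<in>S'. a' s * s Q) \<in> B" and s: "s \<in> S'"
  define a where "a s = (if s \<in> S' then a' s else 0)" for s
  have "(\<lambda>Q. \<Sum>s\<in>S. a s * s Q) = (\<lambda>Q. \<Sum>s\<in>S'. a' s * s Q)"
    using sub fin by (intro ext sum.mono_neutral_cong_right) (auto simp: a_def)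
  then have "a s = 0" using indep_modD[OF ind _, of a s] rel s sub by auto
  then show "a' s = 0" using s by (simp add: a_def)
qed

definition int_submodule :: "('c \<Rightarrow> int) set \<Rightarrow> bool" where
  "int_submodule B \<longleftrightarrow> (\<lambda>_. 0) \<in> B \<and> (\<forall>x\<in>B. \<forall>y\<in>B. (\<lambda>Q. x Q + y Q) \<in> B)
     \<and> (\<forall>x\<in>B. \<forall>k::int. (\<lambda>Q. k * x Q) \<in> B)"

lemma int_submodule_lincomb:
  assumes "int_submodule B" "x \<in> B" "y \<in> B"
  shows "(\<lambda>Q. k * x Q - l * y Q) \<in> B"
proof -
  have add: "\<And>x y. x \<in> B \<Longrightarrow> y \<in> B \<Longrightarrow> (\<lambda>Q. x Q + y Q) \<in> B"
    using assms(1) unfolding int_submodule_def by blast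
  have "(\<lambda>Q. k * x Q) \<in> B" "(\<lambda>Q. (- l) * y Q) \<in> B" using assms unfolding int_submodule_def by blast+
  from add[OF this] show ?thesis by simp
qed

definition extend_by :: "('c \<Rightarrow> int) set \<Rightarrow> ('c \<Rightarrow> int) \<Rightarrow> ('c \<Rightarrow> int) set" where
  "extend_by B g = {\<lambda>P. b P + k * g P | b k. b \<in> B}"

lemma int_submodule_extend_by: "int_submodule B \<Longrightarrow> int_submodule (extend_by B g)"
  unfolding int_submodule_def extend_by_def
proof (intro conjI ballI allI)
  assume B: "(\<lambda>_. 0) \<in> B \<and> (\<forall>x\<in>B. \<forall>y\<in>B. (\<lambda>Q. x Q + y Q) \<in> B) \<and> (\<forall>x\<in>B. \<forall>k::int. (\<lambda>Q. k * x Q) \<in> B)"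
  show "(\<lambda>_. 0) \<in> {\<lambda>P. b P + k * g P | b k. b \<in> B}"
    using B by (intro CollectI exI[of _ "\<lambda>_. 0"] exI[of _ 0]) auto
  fix x y assume "x \<in> {\<lambda>P. b P + k * g P | b k. b \<in> B}" "y \<in> {\<lambda>P. b P + k * g P | b k. b \<in> B}"
  then obtain b1 k1 b2 k2 where "x = (\<lambda>P. b1 P + k1 * g P)" "b1 \<in> B" "y = (\<lambda>P. b2 P + k2 * g P)" "b2 \<in> B"
    by blast
  then show "(\<lambda>Q. x Q + y Q) \<in> {\<lambda>P. b P + k * g P | b k. b \<in> B}"
    using B by (intro CollectI exI[of _ "\<lambda>Q. b1 Q + b2 Q"] exI[of _ "k1 + k2"]) (auto simp: algebra_simps)
next
  fix x and j :: int
  assume B: "(\<lambda>_. 0) \<in> B \<and> (\<forall>x\<in>B. \<forall>y\<in>B. (\<lambda>Q. x Q + y Q) \<in> B) \<and> (\<forall>x\<in>B. \<forall>k::int. (\<lambda>Q. k * x Q) \<in> B)"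
    and "x \<in> {\<lambda>P. b P + k * g P | b k. b \<in> B}"
  then obtain b1 k1 where "x = (\<lambda>P. b1 P + k1 * g P)" "b1 \<in> B" by blast
  then show "(\<lambda>Q. j * x Q) \<in> {\<lambda>P. b P + k * g P | b k. b \<in> B}"
    using B by (intro CollectI exI[of _ "\<lambda>Q. j * b1 Q"] exI[of _ "j * k1"]) (auto simp: algebra_simps)
qed

lemma indep_mod_extend_by_Diff:
  assumes B: "int_submodule B" and fin: "finite S" and ind: "indep_mod B S"
    and s0: "s0 \<in> S" "a s0 \<noteq> 0" and b: "b \<in> B"
    and rel: "\<And>Q. (\<Sum>s\<in>S. a s * s Q) = b Q + c * g Q"
  shows "indep_mod (extend_by B g) (S - {s0})"
  unfolding indep_mod_def
proof (intro allI impI ballI)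
  fix a' s1
  assume "(\<lambda>Q. \<Sum>s\<in>S - {s0}. a' s * s Q) \<in> extend_by B g" and s1: "s1 \<in> S - {s0}"
  then obtain b' c' where b': "b' \<in> B" and rel': "\<And>Q. (\<Sum>s\<in>S - {s0}. a' s * s Q) = b' Q + c' * g Q"
    by (auto simp: extend_by_def fun_eq_iff)
  have "c' = 0"
  proof -
    \<comment> \<open>\<open>c\<close> times the second relation minus \<open>c'\<close> times the first one has no \<open>g\<close>-part\<close>
    define al where "al s = (if s = s0 then - c' * a s0 else c * a' s - c' * a s)" for s
    have "(\<Sum>s\<in>S. al s * s Q) = c * b' Q - c' * b Q" for Q
    proof -
      have "(\<Sum>s\<in>S - {s0}. al s * s Q) = (\<Sum>s\<in>S - {s0}. c * (a' s * s Q) - c' * (a s * s Q))"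
        by (intro sum.cong) (auto simp: al_def algebra_simps)
      also have "\<dots> = c * (\<Sum>s\<in>S - {s0}. a' s * s Q) - c' * (\<Sum>s\<in>S - {s0}. a s * s Q)"
        by (simp only: sum_subtractf sum_distrib_left)
      also have "(\<Sum>s\<in>S - {s0}. a s * s Q) = b Q + c * g Q - a s0 * s0 Q"
        using s0 fin rel[of Q] by (simp add: sum.remove)
      finally have "(\<Sum>s\<in>S - {s0}. al s * s Q) = c * (b' Q + c' * g Q) - c' * (b Q + c * g Q - a s0 * s0 Q)"
        by (simp only: rel')
      moreover have "(\<Sum>s\<in>S. al s * s Q) = - c' * a s0 * s0 Q + (\<Sum>s\<in>S - {s0}. al s * s Q)"
        using s0 fin by (simp add: sum.remove al_def)
      ultimately show ?thesis by (simp add: algebra_simps)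
    qed
    moreover have "(\<lambda>Q. c * b' Q - c' * b Q) \<in> B"
      using int_submodule_lincomb[OF B b' b] .
    ultimately have "al s0 = 0" using indep_modD[OF ind, of al s0] s0 by simp
    then show "c' = 0" using s0 by (simp add: al_def)
  qed
  then have "(\<lambda>Q. \<Sum>s\<in>S - {s0}. a' s * s Q) \<in> B" using rel' b' by simp
  then show "a' s1 = 0"
    using indep_modD[OF indep_mod_subset[OF ind _ fin]] s1 by blast
qed

lemma indep_mod_extend_by:
  assumes B: "int_submodule B" and fin: "finite S" and ind: "indep_mod B S"
  shows "\<exists>S0\<subseteq>S. card S \<le> card S0 + 1 \<and> indep_mod (extend_by B g) S0"
proof (cases "indep_mod (extend_by B g) S")
  case False
  then obtain a s0 where "(\<lambda>Q. \<Sum>s\<in>S. a s * s Q) \<in> extend_by B g" and s0: "s0 \<in> S" "a s0 \<noteq> 0"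
    unfolding indep_mod_def by blast
  then obtain b c where "b \<in> B" "\<And>Q. (\<Sum>s\<in>S. a s * s Q) = b Q + c * g Q"
    by (auto simp: extend_by_def fun_eq_iff)
  then have "indep_mod (extend_by B g) (S - {s0})"
    by (rule indep_mod_extend_by_Diff[where a = a, OF B fin ind s0])
  moreover have "card S \<le> card (S - {s0}) + 1" using s0 fin by (simp add: card_Diff_singleton)
  ultimately show ?thesis by (intro exI[of _ "S - {s0}"]) auto
next
  case True
  then show ?thesis by (intro exI[of _ S]) simp
qed

lemma indep_mod_extend_by_sum:
  assumes "finite N"
  shows "int_submodule B \<Longrightarrow> finite S \<Longrightarrow> indep_mod B S \<Longrightarrow>
    B' \<subseteq> {\<lambda>P. b P + (\<Sum>e\<in>N. k e * g e P) | b k. b \<in> B} \<Longrightarrow>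
    \<exists>S'\<subseteq>S. card S \<le> card S' + card N \<and> indep_mod B' S'"
  using assms
proof (induction N arbitrary: B S rule: finite_induct)
  case empty
  then have "B' \<subseteq> B" by auto
  then show ?case using indep_mod_anti_mono[OF _ empty.prems(3)] by (intro exI[of _ S]) simp
next
  case (insert e N)
  obtain S0 where S0: "S0 \<subseteq> S" "card S \<le> card S0 + 1" "indep_mod (extend_by B (g e)) S0"
    using indep_mod_extend_by[OF insert.prems(1-3)] by blast
  have "B' \<subseteq> {\<lambda>P. b P + (\<Sum>e\<in>N. k e * g e P) | b k. b \<in> extend_by B (g e)}"
  proof
    fix x assume "x \<in> B'"
    then obtain b k where b: "b \<in> B" and x: "x = (\<lambda>P. b P + (\<Sum>e\<in>insert e N. k e * g e P))"
      using insert.prems(4) by blast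
    have "x = (\<lambda>P. (b P + k e * g e P) + (\<Sum>e\<in>N. k e * g e P))"
      unfolding x using insert.hyps by (simp add: algebra_simps)
    moreover have "(\<lambda>P. b P + k e * g e P) \<in> extend_by B (g e)" unfolding extend_by_def using b by blast
    ultimately show "x \<in> {\<lambda>P. b P + (\<Sum>e\<in>N. k e * g e P) | b k. b \<in> extend_by B (g e)}"
      by (intro CollectI exI[of _ "\<lambda>P. b P + k e * g e P"] exI[of _ k]) simp
  qed
  then obtain S' where S': "S' \<subseteq> S0" "card S0 \<le> card S' + card N" "indep_mod B' S'"
    using insert.IH[OF int_submodule_extend_by[OF insert.prems(1)] _ S0(3)] S0(1) insert.prems(2)
      finite_subset by blast
  moreover have "card S \<le> card S' + card (insert e N)" using S0(2) S'(2) insert.hyps by simp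
  ultimately show ?case using S0(1) by (intro exI[of _ S']) auto
qed

section \<open>Cubical chains and Betti numbers\<close>

lemma boundary_eq_sum:
  assumes "finite F" "{Q. c Q \<noteq> 0} \<subseteq> F"
  shows "boundary c P = (\<Sum>Q\<in>F. c Q * bd_coeff Q P)"
  unfolding boundary_def using assms by (intro sum.mono_neutral_left) auto

lemma chains_finite_support: "c \<in> Defs.chains d k X \<Longrightarrow> finite {Q. c Q \<noteq> 0}"
  unfolding chains_def by simp

lemma chains_support: "c \<in> Defs.chains d k X \<Longrightarrow> c Q \<noteq> 0 \<Longrightarrow> Q \<in> elem_cubes d k X"
  unfolding chains_def by simp

lemma zero_in_chains: "(\<lambda>_. 0) \<in> Defs.chains d k X"
  unfolding chains_def by simp

lemma add_in_chains:
  assumes "c1 \<in> Defs.chains d k X" "c2 \<in> Defs.chains d k X"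
  shows "(\<lambda>Q. c1 Q + c2 Q) \<in> Defs.chains d k X"
proof -
  have "{Q. c1 Q + c2 Q \<noteq> 0} \<subseteq> {Q. c1 Q \<noteq> 0} \<union> {Q. c2 Q \<noteq> 0}" by auto
  then show ?thesis using assms unfolding chains_def by (auto intro: finite_subset)
qed

lemma smult_in_chains: "c \<in> Defs.chains d k X \<Longrightarrow> (\<lambda>Q. j * c Q) \<in> Defs.chains d k X"
  unfolding chains_def by (auto intro: finite_subset[of _ "{Q. c Q \<noteq> 0}"])

lemma boundary_add:
  assumes "finite {Q. c1 Q \<noteq> 0}" "finite {Q. c2 Q \<noteq> 0}"
  shows "boundary (\<lambda>Q. c1 Q + c2 Q) = (\<lambda>P. boundary c1 P + boundary c2 P)"
proof
  fix P
  define F where "F = {Q. c1 Q \<noteq> 0} \<union> {Q. c2 Q \<noteq> 0}"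
  have F: "finite F" using assms by (simp add: F_def)
  have "boundary (\<lambda>Q. c1 Q + c2 Q) P = (\<Sum>Q\<in>F. (c1 Q + c2 Q) * bd_coeff Q P)"
    by (rule boundary_eq_sum[OF F]) (auto simp: F_def)
  also have "\<dots> = (\<Sum>Q\<in>F. c1 Q * bd_coeff Q P) + (\<Sum>Q\<in>F. c2 Q * bd_coeff Q P)"
    by (simp add: distrib_right sum.distrib)
  also have "\<dots> = boundary c1 P + boundary c2 P"
    using boundary_eq_sum[OF F, of c1] boundary_eq_sum[OF F, of c2] by (auto simp: F_def)
  finally show "boundary (\<lambda>Q. c1 Q + c2 Q) P = boundary c1 P + boundary c2 P" .
qed

lemma boundary_smult:
  assumes "finite {Q. c Q \<noteq> 0}"
  shows "boundary (\<lambda>Q. j * c Q) = (\<lambda>P. j * boundary c P)"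
proof
  fix P
  have "boundary (\<lambda>Q. j * c Q) P = (\<Sum>Q\<in>{Q. c Q \<noteq> 0}. (j * c Q) * bd_coeff Q P)"
    by (rule boundary_eq_sum[OF assms]) auto
  then show "boundary (\<lambda>Q. j * c Q) P = j * boundary c P"
    by (simp add: boundary_def sum_distrib_left mult.assoc)
qed

lemma zero_in_bdries: "(\<lambda>_. 0) \<in> bdries d k X"
  using zero_in_chains[of d "Suc k" X] unfolding bdries_def boundary_def by force

lemma int_submodule_bdries: "int_submodule (bdries d k X)"
  unfolding int_submodule_def
proof (intro conjI ballI allI)
  show "(\<lambda>_. 0) \<in> bdries d k X" by (rule zero_in_bdries)
next
  fix x y assume "x \<in> bdries d k X" "y \<in> bdries d k X"
  then obtain c1 c2 where c: "c1 \<in> Defs.chains d (Suc k) X" "c2 \<in> Defs.chains d (Suc k) X"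
    and "x = boundary c1" "y = boundary c2"
    unfolding bdries_def by blast
  then have "(\<lambda>Q. x Q + y Q) = boundary (\<lambda>Q. c1 Q + c2 Q)"
    using boundary_add[OF chains_finite_support chains_finite_support] by simp
  then show "(\<lambda>Q. x Q + y Q) \<in> bdries d k X"
    unfolding bdries_def using add_in_chains[OF c] by blast
next
  fix x and j :: int assume "x \<in> bdries d k X"
  then obtain c where c: "c \<in> Defs.chains d (Suc k) X" "x = boundary c"
    unfolding bdries_def by blast
  then have "(\<lambda>Q. j * x Q) = boundary (\<lambda>Q. j * c Q)"
    using boundary_smult[OF chains_finite_support] by simp
  then show "(\<lambda>Q. j * x Q) \<in> bdries d k X"
    unfolding bdries_def using smult_in_chains[OF c(1)] by blast
qed

definition unit_chain :: "cube \<Rightarrow> cube \<Rightarrow> int" where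
  "unit_chain e = (\<lambda>Q. if Q = e then 1 else 0)"

lemma boundary_split:
  assumes c: "finite {Q. c Q \<noteq> 0}" and N: "finite N"
  shows "boundary c P = boundary (\<lambda>Q. if Q \<in> N then 0 else c Q) P + (\<Sum>e\<in>N. c e * boundary (unit_chain e) P)"
proof -
  define F where "F = {Q. c Q \<noteq> 0} \<union> N"
  have F: "finite F" "N \<subseteq> F" using c N by (auto simp: F_def)
  have "boundary c P = (\<Sum>Q\<in>F. c Q * bd_coeff Q P)"
    by (rule boundary_eq_sum[OF F(1)]) (auto simp: F_def)
  also have "\<dots> = (\<Sum>Q\<in>F - N. c Q * bd_coeff Q P) + (\<Sum>Q\<in>N. c Q * bd_coeff Q P)"
    by (rule sum.subset_diff[OF F(2,1)])
  also have "(\<Sum>Q\<in>F - N. c Q * bd_coeff Q P) = boundary (\<lambda>Q. if Q \<in> N then 0 else c Q) P"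
    using F by (subst boundary_eq_sum[of "F - N"]) (auto simp: F_def intro!: sum.cong)
  also have "(\<Sum>Q\<in>N. c Q * bd_coeff Q P) = (\<Sum>e\<in>N. c e * boundary (unit_chain e) P)"
    using boundary_eq_sum[of "{e}" "unit_chain e" P for e] by (simp add: unit_chain_def)
  finally show ?thesis .
qed

definition indep_cycles :: "nat \<Rightarrow> nat \<Rightarrow> (nat \<Rightarrow> real) set \<Rightarrow> (cube \<Rightarrow> int) set \<Rightarrow> bool" where
  "indep_cycles d k X S \<longleftrightarrow> finite S \<and> S \<subseteq> cycles d k X \<and> indep_mod (bdries d k X) S"

lemma betti_eq_Sup_indep_cycles: "betti d k X = Sup {card S | S. indep_cycles d k X S}"
  unfolding betti_def indep_cycles_def indep_mod_def by simp

lemma indep_cycles_empty: "indep_cycles d k X {}"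
  unfolding indep_cycles_def indep_mod_def by simp

lemma card_indep_cycles_le:
  assumes fin: "finite (elem_cubes d k X)" and S: "indep_cycles d k X S"
  shows "card S \<le> card (elem_cubes d k X)"
proof -
  have S': "finite S" "S \<subseteq> cycles d k X" "indep_mod (bdries d k X) S"
    using S unfolding indep_cycles_def by auto
  have "indep_mod {\<lambda>_. 0} S" by (rule indep_mod_anti_mono[OF _ S'(3)]) (simp add: zero_in_bdries)
  moreover have "\<forall>s\<in>S. \<forall>Q. s Q \<noteq> 0 \<longrightarrow> Q \<in> elem_cubes d k X"
    using S'(2) chains_support unfolding cycles_def by blast
  ultimately show ?thesis using card_indep_le_card_support[OF fin S'(1)] by blast
qed

lemma bdd_above_card_indep_cycles:
  "finite (elem_cubes d k X) \<Longrightarrow> bdd_above {card S | S. indep_cycles d k X S}"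
  using card_indep_cycles_le by (intro bdd_aboveI[of _ "card (elem_cubes d k X)"]) auto

lemma card_le_betti:
  "finite (elem_cubes d k X) \<Longrightarrow> indep_cycles d k X S \<Longrightarrow> card S \<le> betti d k X"
  unfolding betti_eq_Sup_indep_cycles by (intro cSup_upper bdd_above_card_indep_cycles) blast+

lemma indep_cycles_card_betti:
  assumes "finite (elem_cubes d k X)"
  obtains S where "indep_cycles d k X S" "card S = betti d k X"
proof -
  have ne: "{card S | S. indep_cycles d k X S} \<noteq> {}" using indep_cycles_empty by blast
  have "finite {card S | S. indep_cycles d k X S}"
    using bdd_above_card_indep_cycles[OF assms] by (simp add: bdd_above_nat)
  from Max_in[OF this ne] have "betti d k X \<in> {card S | S. indep_cycles d k X S}"
    unfolding betti_eq_Sup_indep_cycles Sup_nat_def by (simp only: if_not_P[OF ne])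
  then obtain S where "indep_cycles d k X S" "betti d k X = card S" by blast
  then show ?thesis using that by simp
qed

lemma elem_cubes_mono: "A \<subseteq> Y \<Longrightarrow> elem_cubes d k A \<subseteq> elem_cubes d k Y"
  unfolding elem_cubes_def by auto

lemma chains_mono: "A \<subseteq> Y \<Longrightarrow> Defs.chains d k A \<subseteq> Defs.chains d k Y"
  unfolding chains_def using elem_cubes_mono[of A Y d k] by auto

lemma cycles_mono: "A \<subseteq> Y \<Longrightarrow> cycles d k A \<subseteq> cycles d k Y"
  unfolding cycles_def using chains_mono[of A Y d k] by auto

lemma bdries_subset_extend_new_cells:
  fixes A Y :: "(nat \<Rightarrow> real) set"
  assumes fin: "finite (elem_cubes d (Suc q) Y)"
  defines "N \<equiv> elem_cubes d (Suc q) Y - elem_cubes d (Suc q) A"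
  shows "bdries d q Y \<subseteq>
    {\<lambda>P. b P + (\<Sum>e\<in>N. k e * boundary (unit_chain e) P) | b k. b \<in> bdries d q A}"
proof
  fix x assume "x \<in> bdries d q Y"
  then obtain c where c: "c \<in> Defs.chains d (Suc q) Y" "x = boundary c" unfolding bdries_def by blast
  define cA where "cA = (\<lambda>Q. if Q \<in> N then 0 else c Q)"
  have "cA \<in> Defs.chains d (Suc q) A"
    using chains_finite_support[OF c(1)] chains_support[OF c(1)] unfolding chains_def
    by (auto simp: cA_def N_def intro: finite_subset[of _ "{Q. c Q \<noteq> 0}"])
  then have "boundary cA \<in> bdries d q A" unfolding bdries_def by blast
  moreover have "x = (\<lambda>P. boundary cA P + (\<Sum>e\<in>N. c e * boundary (unit_chain e) P))"
    using boundary_split[OF chains_finite_support[OF c(1)], of N] fin c(2)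
    by (auto simp: cA_def N_def)
  ultimately show "x \<in> {\<lambda>P. b P + (\<Sum>e\<in>N. k e * boundary (unit_chain e) P) | b k. b \<in> bdries d q A}"
    by blast
qed

lemma betti_le_add_new_cells:
  assumes AY: "A \<subseteq> Y" and fin: "finite (elem_cubes d q Y)" "finite (elem_cubes d (Suc q) Y)"
  shows "betti d q A \<le> betti d q Y + card (elem_cubes d (Suc q) Y - elem_cubes d (Suc q) A)"
proof -
  have "finite (elem_cubes d q A)" using fin(1) elem_cubes_mono[OF AY] finite_subset by blast
  then obtain S where S: "indep_cycles d q A S" "card S = betti d q A" by (rule indep_cycles_card_betti)
  obtain S' where S': "S' \<subseteq> S" "card S \<le> card S' + card (elem_cubes d (Suc q) Y - elem_cubes d (Suc q) A)"
    "indep_mod (bdries d q Y) S'"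
    using indep_mod_extend_by_sum[OF _ int_submodule_bdries _ _ bdries_subset_extend_new_cells[OF fin(2)]]
      fin(2) S(1) unfolding indep_cycles_def by blast
  have "indep_cycles d q Y S'"
    using S' S(1) cycles_mono[OF AY] finite_subset unfolding indep_cycles_def by blast
  then have "card S' \<le> betti d q Y" by (rule card_le_betti[OF fin(1)])
  then show ?thesis using S(2) S'(2) by linarith
qed

section \<open>Translation invariance\<close>

lemma length_shift_cube[simp]: "length (shift_cube y Q) = min (length Q) (length y)"
  unfolding shift_cube_def by simp

lemma nth_shift_cube: "i < length Q \<Longrightarrow> i < length y \<Longrightarrow> shift_cube y Q ! i = (fst (Q!i) + y!i, snd (Q!i))"
  unfolding shift_cube_def by (simp add: case_prod_beta)

lemma shift_cube_uminus: "length Q = length y \<Longrightarrow> shift_cube (map uminus y) (shift_cube y Q) = Q"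
  by (intro nth_equalityI) (auto simp: nth_shift_cube)

lemma shift_cube_list_update: "length Q = length y \<Longrightarrow> i < length Q \<Longrightarrow>
  shift_cube y (Q[i := (l, b)]) = (shift_cube y Q)[i := (l + y!i, b)]"
  by (intro nth_equalityI) (auto simp: nth_shift_cube nth_list_update)

lemma map_snd_shift_cube: "length Q = length y \<Longrightarrow> map snd (shift_cube y Q) = map snd Q"
  by (intro nth_equalityI) (auto simp: nth_shift_cube)

lemma length_filter_snd: "length (filter snd xs) = length (filter id (map snd xs))"
  by (induction xs) auto

lemma eq_shift_cube_iff: "length P = length y \<Longrightarrow> length Z = length y \<Longrightarrow>
  (P = shift_cube y Z) = (shift_cube (map uminus y) P = Z)"
  using shift_cube_uminus[of Z y] shift_cube_uminus[of P "map uminus y"] by auto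

lemma bd_coeff_shift_cube:
  assumes "length R = length y" "length P = length y"
  shows "bd_coeff (shift_cube y R) P = bd_coeff R (shift_cube (map uminus y) P)"
  unfolding bd_coeff_def
proof (intro sum.cong)
  show "{..<length (shift_cube y R)} = {..<length R}" using assms by simp
next
  fix i assume i: "i \<in> {..<length R}"
  then have i': "i < length R" "i < length y" using assms by auto
  have sn: "snd (shift_cube y R ! i) = snd (R!i)" "fst (shift_cube y R ! i) = fst (R!i) + y!i"
    using nth_shift_cube[OF i'] by auto
  have tk: "length (filter snd (take i (shift_cube y R))) = length (filter snd (take i R))"
    unfolding length_filter_snd take_map[symmetric] map_snd_shift_cube[OF assms(1)] ..
  have e1: "(P = (shift_cube y R)[i := (fst (R!i) + y!i + 1, False)]) =
      (shift_cube (map uminus y) P = R[i := (fst (R!i) + 1, False)])"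
    using shift_cube_list_update[OF assms(1) i'(1), of "fst (R!i) + 1" False] eq_shift_cube_iff[of P y "R[i := (fst (R!i) + 1, False)]"] assms
    by (simp add: algebra_simps)
  have e2: "(P = (shift_cube y R)[i := (fst (R!i) + y!i, False)]) =
      (shift_cube (map uminus y) P = R[i := (fst (R!i), False)])"
    using shift_cube_list_update[OF assms(1) i'(1), of "fst (R!i)" False] eq_shift_cube_iff[of P y "R[i := (fst (R!i), False)]"] assms
    by (simp add: algebra_simps)
  show "(if snd (shift_cube y R ! i)
         then (- 1) ^ length (filter snd (take i (shift_cube y R))) *
              ((if P = (shift_cube y R)[i := (fst (shift_cube y R ! i) + 1, False)] then 1 else 0) -
               (if P = (shift_cube y R)[i := (fst (shift_cube y R ! i), False)] then 1 else 0))
         else 0) =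
        (if snd (R ! i)
         then (- 1) ^ length (filter snd (take i R)) *
              ((if shift_cube (map uminus y) P = R[i := (fst (R ! i) + 1, False)] then 1 else 0) -
               (if shift_cube (map uminus y) P = R[i := (fst (R ! i), False)] then 1 else 0))
         else 0)"
    unfolding sn tk using e1 e2 by (simp add: algebra_simps)
qed

lemma bd_coeff_length_neq: "length P \<noteq> length Q \<Longrightarrow> bd_coeff Q P = 0"
  unfolding bd_coeff_def by (intro sum.neutral) auto

definition translate :: "int list \<Rightarrow> (nat \<Rightarrow> real) \<Rightarrow> (nat \<Rightarrow> real)" where
  "translate y p = (\<lambda>i. p i + (if i < length y then real_of_int (y!i) else 0))"

lemma translate_uminus[simp]: "translate (map uminus y) (translate y p) = p"
  unfolding translate_def by auto

lemma translate_uminus_image: "translate (map uminus y) ` translate y ` X = X"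
  by (simp add: image_image)

lemma cube_set_shift_cube:
  assumes "length Q = length y"
  shows "cube_set (shift_cube y Q) = translate y ` cube_set Q"
proof
  show "translate y ` cube_set Q \<subseteq> cube_set (shift_cube y Q)"
  proof
    fix p assume "p \<in> translate y ` cube_set Q"
    then obtain p0 where p0: "p0 \<in> cube_set Q" "p = translate y p0" by auto
    show "p \<in> cube_set (shift_cube y Q)"
      unfolding cube_set_def using p0 assms by (auto simp: cube_set_def translate_def nth_shift_cube)
  qed
next
  show "cube_set (shift_cube y Q) \<subseteq> translate y ` cube_set Q"
  proof
    fix p assume p: "p \<in> cube_set (shift_cube y Q)"
    have "translate (map uminus y) p \<in> cube_set Q"
      using p assms by (auto simp: cube_set_def translate_def nth_shift_cube)
    moreover have "p = translate y (translate (map uminus y) p)"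
      using translate_uminus[of "map uminus y" p] by simp
    ultimately show "p \<in> translate y ` cube_set Q" by blast
  qed
qed

lemma cube_dim_shift_cube: "length Q = length y \<Longrightarrow> cube_dim (shift_cube y Q) = cube_dim Q"
  unfolding cube_dim_def length_filter_snd map_snd_shift_cube ..

lemma elem_cubes_translate:
  assumes y: "length y = d"
  shows "elem_cubes d k (translate y ` X) = shift_cube y ` elem_cubes d k X"
proof
  show "shift_cube y ` elem_cubes d k X \<subseteq> elem_cubes d k (translate y ` X)"
  proof
    fix Q' assume "Q' \<in> shift_cube y ` elem_cubes d k X"
    then obtain Q where Q: "Q \<in> elem_cubes d k X" "Q' = shift_cube y Q" by auto
    have l: "length Q = length y" using Q y by (simp add: elem_cubes_def cubesK_def)
    show "Q' \<in> elem_cubes d k (translate y ` X)"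
      using Q l y cube_set_shift_cube[OF l] cube_dim_shift_cube[OF l]
      by (auto simp: elem_cubes_def cubesK_def)
  qed
next
  show "elem_cubes d k (translate y ` X) \<subseteq> shift_cube y ` elem_cubes d k X"
  proof
    fix Q' assume Q': "Q' \<in> elem_cubes d k (translate y ` X)"
    define Q where "Q = shift_cube (map uminus y) Q'"
    have l': "length Q' = length (map uminus y)" using Q' y by (simp add: elem_cubes_def cubesK_def)
    have l: "length Q = length y" using l' by (simp add: Q_def)
    have QQ: "Q' = shift_cube y Q"
      unfolding Q_def using shift_cube_uminus[OF l'] by simp
    have "cube_set Q = translate (map uminus y) ` cube_set Q'"
      unfolding Q_def by (rule cube_set_shift_cube[OF l'])
    also have "\<dots> \<subseteq> translate (map uminus y) ` translate y ` X" using Q' by (auto simp: elem_cubes_def)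
    finally have "cube_set Q \<subseteq> X" by (simp add: image_image)
    moreover have "cube_dim Q = k" using Q' cube_dim_shift_cube[OF l] QQ by (simp add: elem_cubes_def)
    ultimately have "Q \<in> elem_cubes d k X" using l y by (simp add: elem_cubes_def cubesK_def)
    then show "Q' \<in> shift_cube y ` elem_cubes d k X" using QQ by blast
  qed
qed

definition shift_chain :: "nat \<Rightarrow> int list \<Rightarrow> (cube \<Rightarrow> int) \<Rightarrow> (cube \<Rightarrow> int)" where
  "shift_chain d y c = (\<lambda>Q. if length Q = d then c (shift_cube (map uminus y) Q) else 0)"

lemma chains_support_length: "c \<in> Defs.chains d k X \<Longrightarrow> c Q \<noteq> 0 \<Longrightarrow> length Q = d"
  unfolding Defs.chains_def elem_cubes_def cubesK_def by auto

lemma shift_chain_uminus: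
  assumes "\<And>Q. c Q \<noteq> 0 \<Longrightarrow> length Q = d" "length y = d"
  shows "shift_chain d (map uminus y) (shift_chain d y c) = c"
proof
  fix Q
  show "shift_chain d (map uminus y) (shift_chain d y c) Q = c Q"
  proof (cases "length Q = d")
    case True
    then show ?thesis using shift_cube_uminus[of Q y] assms(2) by (simp add: shift_chain_def)
  next
    case False
    then show ?thesis using assms(1) by (auto simp: shift_chain_def)
  qed
qed

lemma support_shift_chain:
  assumes y: "length y = d"
  shows "{Q. shift_chain d y c Q \<noteq> 0} \<subseteq> shift_cube y ` {Q. c Q \<noteq> 0}"
proof
  fix Q assume "Q \<in> {Q. shift_chain d y c Q \<noteq> 0}"
  then have l: "length Q = d" and nz: "c (shift_cube (map uminus y) Q) \<noteq> 0"
    by (auto simp: shift_chain_def split: if_splits)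
  have "Q = shift_cube y (shift_cube (map uminus y) Q)"
    using shift_cube_uminus[of Q "map uminus y"] l y by simp
  then show "Q \<in> shift_cube y ` {Q. c Q \<noteq> 0}" using nz by blast
qed

lemma inj_on_shift_cube: "length y = d \<Longrightarrow> inj_on (shift_cube y) (cubesK d)"
  by (rule inj_on_inverseI[of _ "shift_cube (map uminus y)"]) (simp add: cubesK_def shift_cube_uminus)

lemma shift_chain_in_chains:
  assumes y: "length y = d" and c: "c \<in> Defs.chains d k X"
  shows "shift_chain d y c \<in> Defs.chains d k (translate y ` X)"
proof -
  note sub = support_shift_chain[OF y, of c]
  have "finite {Q. shift_chain d y c Q \<noteq> 0}"
    using chains_finite_support[OF c] by (rule finite_subset[OF sub finite_imageI])
  moreover have "Q \<in> elem_cubes d k (translate y ` X)" if nzQ: "shift_chain d y c Q \<noteq> 0" for Q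
  proof -
    obtain R where R: "c R \<noteq> 0" "Q = shift_cube y R" using sub nzQ by blast
    have "R \<in> elem_cubes d k X" using c R(1) unfolding Defs.chains_def by blast
    then show ?thesis unfolding elem_cubes_translate[OF y] R(2) by blast
  qed
  ultimately show ?thesis unfolding Defs.chains_def by blast
qed

lemma boundary_shift_chain:
  assumes y: "length y = d" and c: "c \<in> Defs.chains d k X"
  shows "boundary (shift_chain d y c) = shift_chain d y (boundary c)"
proof
  fix P
  define F where "F = {Q. c Q \<noteq> 0}"
  have F: "finite F" using chains_finite_support[OF c] by (simp add: F_def)
  have lF: "\<And>R. R \<in> F \<Longrightarrow> length R = d" using chains_support_length[OF c] by (auto simp: F_def)
  have inj: "inj_on (shift_cube y) F"
    by (rule inj_on_subset[OF inj_on_shift_cube[OF y]]) (auto simp: cubesK_def lF)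
  have "boundary (shift_chain d y c) P = (\<Sum>Q\<in>shift_cube y ` F. shift_chain d y c Q * bd_coeff Q P)"
    using support_shift_chain[OF y, of c] by (intro boundary_eq_sum finite_imageI F) (simp add: F_def)
  also have "\<dots> = (\<Sum>R\<in>F. shift_chain d y c (shift_cube y R) * bd_coeff (shift_cube y R) P)"
    by (simp add: sum.reindex[OF inj])
  also have "\<dots> = (\<Sum>R\<in>F. c R * bd_coeff (shift_cube y R) P)"
    by (intro sum.cong refl) (simp add: shift_chain_def lF y shift_cube_uminus)
  also have "\<dots> = shift_chain d y (boundary c) P"
  proof (cases "length P = d")
    case True
    have "(\<Sum>R\<in>F. c R * bd_coeff (shift_cube y R) P) = (\<Sum>R\<in>F. c R * bd_coeff R (shift_cube (map uminus y) P))"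
      by (intro sum.cong refl) (simp add: bd_coeff_shift_cube lF y True)
    also have "\<dots> = boundary c (shift_cube (map uminus y) P)" unfolding boundary_def F_def ..
    finally show ?thesis using True by (simp add: shift_chain_def)
  next
    case False
    have "(\<Sum>R\<in>F. c R * bd_coeff (shift_cube y R) P) = 0"
      by (intro sum.neutral ballI) (simp add: bd_coeff_length_neq lF y False)
    then show ?thesis using False by (simp add: shift_chain_def)
  qed
  finally show "boundary (shift_chain d y c) P = shift_chain d y (boundary c) P" .
qed

lemma shift_chain_lincomb: "shift_chain d y (\<lambda>Q. \<Sum>s\<in>S. a s * s Q) = (\<lambda>Q. \<Sum>s\<in>S. a s * shift_chain d y s Q)"
  unfolding shift_chain_def by auto

lemma lincomb_in_chains:
  assumes "finite S" "S \<subseteq> Defs.chains d k X"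
  shows "(\<lambda>Q. \<Sum>s\<in>S. a s * s Q) \<in> Defs.chains d k X"
  using assms
proof (induction S rule: finite_induct)
  case empty
  then show ?case using zero_in_chains by simp
next
  case (insert s S)
  then have "(\<lambda>Q. a s * s Q + (\<Sum>s\<in>S. a s * s Q)) \<in> Defs.chains d k X"
    by (intro add_in_chains smult_in_chains) auto
  then show ?case using insert.hyps by simp
qed

lemma inj_on_shift_chain:
  assumes "length y = d"
  shows "inj_on (shift_chain d y) (Defs.chains d k X)"
  using shift_chain_uminus[OF chains_support_length assms]
  by (rule inj_on_inverseI[of _ "shift_chain d (map uminus y)"])

lemma shift_chain_in_bdries:
  assumes y: "length y = d" and b: "b \<in> bdries d k X"
  shows "shift_chain d y b \<in> bdries d k (translate y ` X)"
proof -
  obtain c where c: "c \<in> Defs.chains d (Suc k) X" "b = boundary c" using b unfolding bdries_def by blast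
  then have "shift_chain d y b = boundary (shift_chain d y c)" using boundary_shift_chain[OF y] by simp
  then show ?thesis using shift_chain_in_chains[OF y c(1)] unfolding bdries_def by blast
qed

lemma indep_mod_bdries_shift_chain:
  assumes y: "length y = d" and S: "indep_cycles d k X S"
  shows "indep_mod (bdries d k (translate y ` X)) (shift_chain d y ` S)"
  unfolding indep_mod_def
proof (intro allI impI ballI)
  fix a u
  assume h: "(\<lambda>Q. \<Sum>s\<in>shift_chain d y ` S. a s * s Q) \<in> bdries d k (translate y ` X)"
    and u: "u \<in> shift_chain d y ` S"
  have S': "finite S" "S \<subseteq> Defs.chains d k X" "indep_mod (bdries d k X) S"
    using S unfolding indep_cycles_def cycles_def by auto
  define z where "z = (\<lambda>Q. \<Sum>s\<in>S. a (shift_chain d y s) * s Q)"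
  have z: "z \<in> Defs.chains d k X" unfolding z_def using S'(1,2) by (rule lincomb_in_chains)
  have "shift_chain d y z = (\<lambda>Q. \<Sum>s\<in>shift_chain d y ` S. a s * s Q)"
    using inj_on_subset[OF inj_on_shift_chain[OF y] S'(2)]
    unfolding z_def shift_chain_lincomb by (simp add: sum.reindex)
  then have "shift_chain d (map uminus y) (shift_chain d y z) \<in> bdries d k X"
    using shift_chain_in_bdries[of "map uminus y" d _ k "translate y ` X"] h y
    by (simp add: translate_uminus_image)
  then have "z \<in> bdries d k X" using shift_chain_uminus[OF chains_support_length[OF z] y] by simp
  then have "\<forall>s\<in>S. a (shift_chain d y s) = 0"
    unfolding z_def using indep_modD[OF S'(3), of "\<lambda>s. a (shift_chain d y s)"] by blast
  then show "a u = 0" using u by auto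
qed

lemma indep_cycles_shift_chain:
  assumes y: "length y = d" and S: "indep_cycles d k X S"
  shows "indep_cycles d k (translate y ` X) (shift_chain d y ` S)" "card (shift_chain d y ` S) = card S"
proof -
  have S': "finite S" "S \<subseteq> Defs.chains d k X" "\<And>s. s \<in> S \<Longrightarrow> boundary s = (\<lambda>_. 0)"
    using S unfolding indep_cycles_def cycles_def by auto
  have "shift_chain d y s \<in> cycles d k (translate y ` X)" if s: "s \<in> S" for s
  proof -
    have "boundary (shift_chain d y s) = shift_chain d y (boundary s)"
      using boundary_shift_chain[OF y] S'(2) s by blast
    also have "\<dots> = (\<lambda>_. 0)" using S'(3)[OF s] by (simp add: shift_chain_def)
    finally show ?thesis using shift_chain_in_chains[OF y] S'(2) s unfolding cycles_def by blast
  qed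
  then show "indep_cycles d k (translate y ` X) (shift_chain d y ` S)"
    using indep_mod_bdries_shift_chain[OF y S] S'(1) unfolding indep_cycles_def by blast
  show "card (shift_chain d y ` S) = card S"
    using inj_on_subset[OF inj_on_shift_chain[OF y] S'(2)] by (rule card_image)
qed

lemma betti_translate:
  assumes y: "length y = d"
  shows "betti d k (translate y ` X) = betti d k X"
proof -
  have card_shift: "{card S | S. indep_cycles d k Z S} \<subseteq> {card S | S. indep_cycles d k (translate x ` Z) S}"
    if x: "length x = d" for x Z
  proof
    fix n assume "n \<in> {card S | S. indep_cycles d k Z S}"
    then obtain S where S: "indep_cycles d k Z S" "n = card S" by blast
    then have "indep_cycles d k (translate x ` Z) (shift_chain d x ` S)" "n = card (shift_chain d x ` S)"
      using indep_cycles_shift_chain[OF x S(1)] by simp_all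
    then show "n \<in> {card S | S. indep_cycles d k (translate x ` Z) S}" by blast
  qed
  have "{card S | S. indep_cycles d k (translate y ` X) S} \<subseteq> {card S | S. indep_cycles d k X S}"
    using card_shift[of "map uminus y" "translate y ` X"] y by (simp only: translate_uminus_image length_map)
  with card_shift[OF y, of X] have "{card S | S. indep_cycles d k (translate y ` X) S} = {card S | S. indep_cycles d k X S}"
    by (rule equalityI[rotated])
  then show ?thesis by (simp only: betti_eq_Sup_indep_cycles)
qed

section \<open>Cubes in boxes\<close>

abbreviation cube_hi :: "cube \<Rightarrow> nat \<Rightarrow> int" where
  "cube_hi Q i \<equiv> fst (Q!i) + (if snd (Q!i) then 1 else 0)"

lemma cube_set_subset_box_iff:
  assumes "length Q = d"
  shows "cube_set Q \<subseteq> box d x K \<longleftrightarrow>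
    (\<forall>i<d. x!i - int K \<le> fst (Q!i) \<and> cube_hi Q i \<le> x!i + int K)"
proof
  assume h: "cube_set Q \<subseteq> box d x K"
  show "\<forall>i<d. x!i - int K \<le> fst (Q!i) \<and> cube_hi Q i \<le> x!i + int K"
  proof (intro allI impI conjI)
    fix i assume i: "i < d"
    define lo where "lo j = (if j < d then real_of_int (fst (Q!j)) else 0)" for j
    define up where "up j = (if j < d then real_of_int (cube_hi Q j) else 0)" for j
    have "lo \<in> cube_set Q" using assms by (auto simp: cube_set_def lo_def)
    then have "lo \<in> box d x K" using h by blast
    then have "real_of_int (x!i) - real K \<le> real_of_int (fst (Q!i))" using i by (auto simp: box_def lo_def)
    then show "x!i - int K \<le> fst (Q!i)" by linarith
    have "up \<in> cube_set Q" using assms by (auto simp: cube_set_def up_def)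
    then have "up \<in> box d x K" using h by blast
    then have "real_of_int (cube_hi Q i) \<le> real_of_int (x!i) + real K" using i by (auto simp: box_def up_def)
    then show "cube_hi Q i \<le> x!i + int K" by linarith
  qed
next
  assume h: "\<forall>i<d. x!i - int K \<le> fst (Q!i) \<and> cube_hi Q i \<le> x!i + int K"
  show "cube_set Q \<subseteq> box d x K"
  proof
    fix p assume p: "p \<in> cube_set Q"
    have "real_of_int (x!i) - real K \<le> p i \<and> p i \<le> real_of_int (x!i) + real K" if i: "i < d" for i
    proof -
      have a: "x!i - int K \<le> fst (Q!i)" "cube_hi Q i \<le> x!i + int K" using h i by auto
      have b: "real_of_int (fst (Q!i)) \<le> p i" "p i \<le> real_of_int (fst (Q!i)) + (if snd (Q!i) then 1 else 0)"
        using p i assms by (auto simp: cube_set_def)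
      have c: "real_of_int (x!i) - real K \<le> real_of_int (fst (Q!i))" using a(1) by linarith
      have a2: "real_of_int (cube_hi Q i) \<le> real_of_int (x!i) + real K"
        using a(2) by (metis of_int_add of_int_le_iff of_int_of_nat_eq)
      have e: "real_of_int (fst (Q!i)) + (if snd (Q!i) then 1 else 0) \<le> real_of_int (x!i) + real K"
        using a2 by (cases "snd (Q!i)") simp_all
      show ?thesis using b c e by linarith
    qed
    moreover have "\<forall>i. d \<le> i \<longrightarrow> p i = 0" using p assms by (auto simp: cube_set_def)
    ultimately show "p \<in> box d x K" by (auto simp: box_def)
  qed
qed

lemma mem_Lbox_iff: "Q \<in> Lbox d x K \<longleftrightarrow> length Q = d \<and> (\<forall>i<d. x!i - int K \<le> fst (Q!i) \<and> cube_hi Q i \<le> x!i + int K)"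
  by (cases "length Q = d") (simp_all add: Lbox_def cubesK_def cube_set_subset_box_iff)

lemma finite_Lbox: "finite (Lbox d x K)"
proof -
  define M where "M = (\<Sum>i<d. \<bar>x!i\<bar>) + int K"
  have "Lbox d x K \<subseteq> {Q. set Q \<subseteq> {-M..M} \<times> UNIV \<and> length Q = d}"
  proof
    fix Q assume Q: "Q \<in> Lbox d x K"
    have "set Q \<subseteq> {-M..M} \<times> UNIV"
    proof
      fix z assume "z \<in> set Q"
      then obtain i where i: "i < length Q" "z = Q!i" by (auto simp: in_set_conv_nth)
      have l: "length Q = d" using Q by (simp add: mem_Lbox_iff)
      have "\<bar>x!i\<bar> \<le> (\<Sum>i<d. \<bar>x!i\<bar>)" using i l by (intro member_le_sum) auto
      then show "z \<in> {-M..M} \<times> UNIV" using Q i l unfolding mem_Lbox_iff M_def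
        by (cases "snd (Q!i)") (force simp: mem_Times_iff)+
    qed
    then show "Q \<in> {Q. set Q \<subseteq> {-M..M} \<times> UNIV \<and> length Q = d}" using Q by (simp add: mem_Lbox_iff)
  qed
  moreover have "finite {Q. set Q \<subseteq> {-M..M} \<times> (UNIV :: bool set) \<and> length Q = d}"
    by (intro finite_lists_length_eq) simp
  ultimately show ?thesis by (rule finite_subset)
qed

lemma finite_elem_cubes_subset_box: "X \<subseteq> box d x K \<Longrightarrow> finite (elem_cubes d k X)"
  by (rule finite_subset[OF _ finite_Lbox[of d x K]]) (auto simp: elem_cubes_def Lbox_def)

lemma elem_interval_through_centre:
  fixes l m :: int
  assumes lo: "real_of_int m \<le> real_of_int l + (if b then 1/2 else 0)"
    and hi: "real_of_int l + (if b then 1/2 else 0) \<le> real_of_int m + (if e then 1 else 0)"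
  shows "if b then m = l \<and> e else m \<le> l \<and> l \<le> m + (if e then 1 else 0)"
proof (cases b)
  case True
  have "real_of_int m < real_of_int (l + 1)" using lo True by simp
  then have "m < l + 1" by (simp only: of_int_less_iff)
  then have ml: "m \<le> l" by simp
  have e
  proof (rule ccontr)
    assume "\<not> e"
    then have "real_of_int l < real_of_int m" using hi True by simp
    then have "l < m" by (simp only: of_int_less_iff)
    then show False using ml by simp
  qed
  then have "real_of_int l < real_of_int (m + 1)" using hi True by simp
  then have "l < m + 1" by (simp only: of_int_less_iff)
  then have "l \<le> m" by simp
  then show ?thesis using ml True \<open>e\<close> by simp
next
  case False
  then have "real_of_int m \<le> real_of_int l" "real_of_int l \<le> real_of_int (m + (if e then 1 else 0))"
    using lo hi by (simp_all split: if_splits)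
  then show ?thesis using False by (simp only: of_int_le_iff if_False)
qed

definition cube_centre :: "cube \<Rightarrow> nat \<Rightarrow> real" where
  "cube_centre F = (\<lambda>j. if j < length F then real_of_int (fst (F!j)) + (if snd (F!j) then 1/2 else 0) else 0)"

lemma cube_centre_in_cube_set: "cube_centre F \<in> cube_set F"
  by (auto simp: cube_set_def cube_centre_def)

definition faces_on_boundary :: "nat \<Rightarrow> nat \<Rightarrow> cube set" where
  "faces_on_boundary d n = {F \<in> Lbox d (replicate d 0) n.
     \<exists>i<d. \<not> snd (F!i) \<and> (fst (F!i) = int n \<or> fst (F!i) = - int n)}"

lemma cube_through_centre:
  assumes F: "F \<in> Lbox d (replicate d 0) n" "F \<notin> faces_on_boundary d n"
    and Q: "length Q = d" "cube_centre F \<in> cube_set Q"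
  shows "Q \<in> Lbox d (replicate d 0) n" "cube_set F \<subseteq> cube_set Q"
proof -
  have lF: "length F = d" using F(1) by (simp add: mem_Lbox_iff)
  have coord: "if snd (F!i) then fst (Q!i) = fst (F!i) \<and> snd (Q!i)
      else fst (Q!i) \<le> fst (F!i) \<and> fst (F!i) \<le> cube_hi Q i" if i: "i < d" for i
    using elem_interval_through_centre[of "fst (Q!i)" "fst (F!i)" "snd (F!i)" "snd (Q!i)"]
      Q i lF by (auto simp: cube_set_def cube_centre_def)
  have "- int n \<le> fst (Q!i) \<and> cube_hi Q i \<le> int n" if i: "i < d" for i
    using coord[OF i] F i unfolding faces_on_boundary_def mem_Lbox_iff
    by (cases "snd (F!i)"; cases "snd (Q!i)") fastforce+
  then show "Q \<in> Lbox d (replicate d 0) n" using Q(1) by (simp add: mem_Lbox_iff)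
  show "cube_set F \<subseteq> cube_set Q"
  proof
    fix p assume p: "p \<in> cube_set F"
    have "real_of_int (fst (Q!i)) \<le> p i \<and> p i \<le> real_of_int (fst (Q!i)) + (if snd (Q!i) then 1 else 0)"
      if i: "i < d" for i
      using coord[OF i] p i lF by (cases "snd (F!i)"; cases "snd (Q!i)") (auto simp: cube_set_def)
    then show "p \<in> cube_set Q" using p Q(1) lF by (auto simp: cube_set_def)
  qed
qed

lemma XL_Lbox_subset_Xt_Lambda: "XL (Lbox d (replicate d 0) n) \<omega> t \<subseteq> Xt d \<omega> t \<inter> Lambda d n"
  unfolding XL_def Xt_def Lambda_def Lbox_def by blast

text \<open>A cell of \<open>X(t) \<inter> \<Lambda>\<^sub>n\<close> lies in a cube \<open>Q\<close> of \<open>X(t)\<close> through its centre; unless the cell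
  is a face on \<open>\<partial>\<Lambda>\<^sub>n\<close>, that cube lies in \<open>\<Lambda>\<^sub>n\<close> itself.\<close>
lemma new_cells_subset_faces_on_boundary:
  "elem_cubes d k (Xt d \<omega> t \<inter> Lambda d n) - elem_cubes d k (XL (Lbox d (replicate d 0) n) \<omega> t)
     \<subseteq> faces_on_boundary d n"
proof
  fix F assume F: "F \<in> elem_cubes d k (Xt d \<omega> t \<inter> Lambda d n) - elem_cubes d k (XL (Lbox d (replicate d 0) n) \<omega> t)"
  have lF: "length F = d" and sF: "cube_set F \<subseteq> Xt d \<omega> t \<inter> Lambda d n"
    using F by (auto simp: elem_cubes_def cubesK_def)
  have FL: "F \<in> Lbox d (replicate d 0) n" using sF lF unfolding Lbox_def Lambda_def cubesK_def by auto
  show "F \<in> faces_on_boundary d n"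
  proof (rule ccontr)
    assume nB: "F \<notin> faces_on_boundary d n"
    have "cube_centre F \<in> Xt d \<omega> t" using cube_centre_in_cube_set sF by blast
    then obtain Q where Q: "Q \<in> cubesK d" "\<omega> Q \<le> t" "cube_centre F \<in> cube_set Q" unfolding Xt_def by blast
    have lQ: "length Q = d" using Q(1) by (simp add: cubesK_def)
    have "cube_set F \<subseteq> XL (Lbox d (replicate d 0) n) \<omega> t"
      using cube_through_centre[OF FL nB lQ Q(3)] Q(2) unfolding XL_def by blast
    then show False using F by (auto simp: elem_cubes_def)
  qed
qed

lemma card_lists_fixed_nth_le:
  assumes A: "finite A" and i: "i < d"
  shows "card {F. length F = d \<and> set F \<subseteq> A \<and> F!i = a} \<le> card A ^ (d - 1)"
proof -
  define D where "D = {xs. set xs \<subseteq> A \<and> length xs = d - 1}"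
  have D: "finite D" "card D = card A ^ (d - 1)"
    unfolding D_def using A by (simp_all add: finite_lists_length_eq card_lists_length_eq)
  have "{F. length F = d \<and> set F \<subseteq> A \<and> F!i = a} \<subseteq> (\<lambda>xs. take i xs @ a # drop i xs) ` D"
  proof
    fix F assume F: "F \<in> {F. length F = d \<and> set F \<subseteq> A \<and> F!i = a}"
    define G where "G = take i F @ drop (Suc i) F"
    have "G \<in> D"
      using F i set_take_subset[of i F] set_drop_subset[of "Suc i" F] by (auto simp: D_def G_def)
    moreover have "F = take i G @ a # drop i G"
      using F i id_take_nth_drop[of i F] by (simp add: G_def)
    ultimately show "F \<in> (\<lambda>xs. take i xs @ a # drop i xs) ` D" by (rule rev_image_eqI)
  qed
  then have "card {F. length F = d \<and> set F \<subseteq> A \<and> F!i = a} \<le> card ((\<lambda>xs. take i xs @ a # drop i xs) ` D)"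
    using D(1) by (intro card_mono finite_imageI)
  also have "\<dots> \<le> card D" using D(1) by (rule card_image_le)
  finally show ?thesis using D(2) by simp
qed

lemma faces_on_boundary_subset:
  "faces_on_boundary d n \<subseteq> (\<Union>i<d. \<Union>s\<in>{int n, - int n}.
     {F. length F = d \<and> set F \<subseteq> {- int n..int n} \<times> UNIV \<and> F!i = (s, False)})"
proof
  fix F assume F: "F \<in> faces_on_boundary d n"
  then have FL: "F \<in> Lbox d (replicate d 0) n" unfolding faces_on_boundary_def by blast
  then have lF: "length F = d" by (simp add: mem_Lbox_iff)
  have "set F \<subseteq> {- int n..int n} \<times> UNIV"
  proof
    fix z assume "z \<in> set F"
    then obtain j where j: "j < d" "z = F!j" using lF by (auto simp: in_set_conv_nth)
    then show "z \<in> {- int n..int n} \<times> UNIV"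
      using FL by (cases "snd (F!j)") (auto simp: mem_Lbox_iff mem_Times_iff)
  qed
  moreover obtain i where "i < d" "\<not> snd (F!i)" "fst (F!i) = int n \<or> fst (F!i) = - int n"
    using F unfolding faces_on_boundary_def by blast
  ultimately show "F \<in> (\<Union>i<d. \<Union>s\<in>{int n, - int n}.
     {F. length F = d \<and> set F \<subseteq> {- int n..int n} \<times> UNIV \<and> F!i = (s, False)})"
    using lF by (intro UN_I[of i]) (auto simp: prod_eq_iff)
qed

lemma card_faces_on_boundary_le: "card (faces_on_boundary d n) \<le> 2 * d * (2 * (2 * n + 1)) ^ (d - 1)"
proof -
  define R where "R = {- int n..int n} \<times> (UNIV :: bool set)"
  have R: "finite R" "card R = 2 * (2 * n + 1)" by (simp_all add: R_def card_cartesian_product)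
  define T where "T i s = {F. length F = d \<and> set F \<subseteq> R \<and> F!i = (s, False)}" for i s
  have fT: "finite (T i s)" for i s
    unfolding T_def by (rule finite_subset[OF _ finite_lists_length_eq[OF R(1), of d]]) auto
  have "faces_on_boundary d n \<subseteq> (\<Union>i<d. \<Union>s\<in>{int n, - int n}. T i s)"
    unfolding T_def R_def by (rule faces_on_boundary_subset)
  then have "card (faces_on_boundary d n) \<le> card (\<Union>i<d. \<Union>s\<in>{int n, - int n}. T i s)"
    by (intro card_mono) (auto simp: fT)
  also have "\<dots> \<le> (\<Sum>i<d. \<Sum>s\<in>{int n, - int n}. card (T i s))"
    by (intro order_trans[OF card_UN_le] sum_mono card_UN_le) simp_all
  also have "\<dots> \<le> (\<Sum>i<d. \<Sum>s\<in>{int n, - int n}. card R ^ (d - 1))"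
    unfolding T_def by (intro sum_mono card_lists_fixed_nth_le R(1)) auto
  also have "\<dots> \<le> (\<Sum>i<d. 2 * card R ^ (d - 1))"
    by (intro sum_mono) (simp add: card_insert_le_m1)
  also have "\<dots> = 2 * d * (2 * (2 * n + 1)) ^ (d - 1)" by (simp add: R(2))
  finally show ?thesis .
qed

section \<open>Pivotal boxes\<close>

definition betti_pivotal :: "nat \<Rightarrow> nat \<Rightarrow> nat \<Rightarrow> (cube \<Rightarrow> real) \<Rightarrow> real \<Rightarrow> int list \<Rightarrow> bool" where
  "betti_pivotal d q K \<omega> t x \<longleftrightarrow> (\<forall>L. finite L \<and> L \<subseteq> cubesK d \<and> Lbox d x K \<subseteq> L \<longrightarrow>
     1 + betti d q (XL (L - Lbox d x K) \<omega> t) \<le> betti d q (XL L \<omega> t))"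

lemma card_le_betti_of_pivotal:
  assumes "finite G"
  shows "(\<forall>x\<in>G. betti_pivotal d q K \<omega> t x) \<Longrightarrow> (\<forall>x\<in>G. Lbox d x K \<subseteq> L) \<Longrightarrow>
    (\<forall>x\<in>G. \<forall>y\<in>G. x \<noteq> y \<longrightarrow> Lbox d x K \<inter> Lbox d y K = {}) \<Longrightarrow> finite L \<Longrightarrow> L \<subseteq> cubesK d \<Longrightarrow>
    card G \<le> betti d q (XL L \<omega> t)"
  using assms
proof (induction G arbitrary: L rule: finite_induct)
  case empty then show ?case by simp
next
  case (insert x G)
  define L1 where "L1 = L - Lbox d x K"
  have h1: "\<forall>y\<in>G. Lbox d y K \<subseteq> L1"
  proof
    fix y assume y: "y \<in> G"
    then have "y \<noteq> x" using insert.hyps(2) by blast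
    then have "Lbox d x K \<inter> Lbox d y K = {}" using insert.prems(3) y by blast
    moreover have "Lbox d y K \<subseteq> L" using insert.prems(2) y by blast
    ultimately show "Lbox d y K \<subseteq> L1" unfolding L1_def by blast
  qed
  have h0: "\<forall>y\<in>G. betti_pivotal d q K \<omega> t y" using insert.prems(1) by blast
  have h2: "\<forall>y\<in>G. \<forall>z\<in>G. y \<noteq> z \<longrightarrow> Lbox d y K \<inter> Lbox d z K = {}" using insert.prems(3) by blast
  have h3: "finite L1" "L1 \<subseteq> cubesK d" using insert.prems(4,5) unfolding L1_def by auto
  have IH: "card G \<le> betti d q (XL L1 \<omega> t)" by (rule insert.IH[OF h0 h1 h2 h3])
  have gx: "betti_pivotal d q K \<omega> t x" using insert.prems(1) by blast
  have "Lbox d x K \<subseteq> L" using insert.prems(2) by blast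
  then have "1 + betti d q (XL L1 \<omega> t) \<le> betti d q (XL L \<omega> t)"
    using gx insert.prems(4,5) unfolding betti_pivotal_def L1_def by blast
  then show ?case using IH insert.hyps by simp
qed

lemma shift_cube_in_cubesK: "length y = d \<Longrightarrow> Q \<in> cubesK d \<Longrightarrow> shift_cube y Q \<in> cubesK d"
  by (simp add: cubesK_def)

lemma XL_shift_cube_tau:
  assumes y: "length y = d" and M: "M \<subseteq> cubesK d"
  shows "XL (shift_cube y ` M) (tau d y \<omega>) t = translate y ` XL M \<omega> t"
proof -
  have val: "tau d y \<omega> (shift_cube y R) = \<omega> R" if "R \<in> M" for R
  proof -
    have "R \<in> cubesK d" using M that by blast
    then show ?thesis using shift_cube_in_cubesK[OF y] shift_cube_uminus[of R y] y by (simp add: tau_def cubesK_def)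
  qed
  have cs: "cube_set (shift_cube y R) = translate y ` cube_set R" if "R \<in> M" for R
    using M that y by (intro cube_set_shift_cube) (auto simp: cubesK_def)
  show ?thesis
  proof
    show "XL (shift_cube y ` M) (tau d y \<omega>) t \<subseteq> translate y ` XL M \<omega> t"
    proof
      fix p assume "p \<in> XL (shift_cube y ` M) (tau d y \<omega>) t"
      then obtain R where R: "R \<in> M" "tau d y \<omega> (shift_cube y R) \<le> t" "p \<in> cube_set (shift_cube y R)"
        unfolding XL_def by blast
      then obtain p0 where "p0 \<in> cube_set R" "p = translate y p0" using cs by blast
      moreover have "cube_set R \<subseteq> XL M \<omega> t" using R val unfolding XL_def by auto
      ultimately show "p \<in> translate y ` XL M \<omega> t" by blast
    qed
    show "translate y ` XL M \<omega> t \<subseteq> XL (shift_cube y ` M) (tau d y \<omega>) t"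
    proof
      fix p assume "p \<in> translate y ` XL M \<omega> t"
      then obtain p0 R where R: "R \<in> M" "\<omega> R \<le> t" "p0 \<in> cube_set R" "p = translate y p0"
        unfolding XL_def by blast
      then have "p \<in> cube_set (shift_cube y R)" using cs by blast
      moreover have "tau d y \<omega> (shift_cube y R) \<le> t" using val R by simp
      ultimately show "p \<in> XL (shift_cube y ` M) (tau d y \<omega>) t" using R(1) unfolding XL_def by blast
    qed
  qed
qed

lemma shift_cube_Lbox:
  assumes x: "length x = d"
  shows "shift_cube (map uminus x) ` Lbox d x K = Lbox d (replicate d 0) K"
proof
  show "shift_cube (map uminus x) ` Lbox d x K \<subseteq> Lbox d (replicate d 0) K"
  proof
    fix Q' assume "Q' \<in> shift_cube (map uminus x) ` Lbox d x K"
    then obtain Q where Q: "Q \<in> Lbox d x K" "Q' = shift_cube (map uminus x) Q" by blast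
    have lQ: "length Q = d" using Q by (simp add: mem_Lbox_iff)
    show "Q' \<in> Lbox d (replicate d 0) K"
      using Q lQ x by (auto simp: mem_Lbox_iff nth_shift_cube)
  qed
  show "Lbox d (replicate d 0) K \<subseteq> shift_cube (map uminus x) ` Lbox d x K"
  proof
    fix Q assume Q: "Q \<in> Lbox d (replicate d 0) K"
    have lQ: "length Q = d" using Q by (simp add: mem_Lbox_iff)
    have "shift_cube x Q \<in> Lbox d x K" using Q lQ x by (auto simp: mem_Lbox_iff nth_shift_cube)
    moreover have "Q = shift_cube (map uminus x) (shift_cube x Q)" using shift_cube_uminus[of Q x] lQ x by simp
    ultimately show "Q \<in> shift_cube (map uminus x) ` Lbox d x K" by blast
  qed
qed

lemma betti_pivotal_if_tau_in_Omega_q: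
  assumes x: "length x = d" and om: "tau d (map uminus x) \<omega> \<in> Omega_q d q (replicate d 0) K t"
  shows "betti_pivotal d q K \<omega> t x"
  unfolding betti_pivotal_def
proof (intro allI impI)
  fix L assume L: "finite L \<and> L \<subseteq> cubesK d \<and> Lbox d x K \<subseteq> L"
  define y where "y = map uminus x"
  have y: "length y = d" using x by (simp add: y_def)
  define L' where "L' = shift_cube y ` L"
  have LB: "Lbox d x K \<subseteq> cubesK d" by (auto simp: Lbox_def)
  have sL: "shift_cube y ` Lbox d x K = Lbox d (replicate d 0) K" unfolding y_def by (rule shift_cube_Lbox[OF x])
  have L'1: "finite L'" "L' \<subseteq> cubesK d" using L shift_cube_in_cubesK[OF y] by (auto simp: L'_def)
  have L'2: "Lbox d (replicate d 0) K \<subseteq> L'" using L sL unfolding L'_def by blast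
  have "1 + betti d q (XL (L' - Lbox d (replicate d 0) K) (tau d y \<omega>) t) \<le> betti d q (XL L' (tau d y \<omega>) t)"
    using om L'1 L'2 unfolding Omega_q_def y_def by blast
  moreover have "L' - Lbox d (replicate d 0) K = shift_cube y ` (L - Lbox d x K)"
    unfolding L'_def sL[symmetric] using L LB by (intro inj_on_image_set_diff[OF inj_on_shift_cube[OF y], symmetric]) auto
  moreover have "XL (shift_cube y ` (L - Lbox d x K)) (tau d y \<omega>) t = translate y ` XL (L - Lbox d x K) \<omega> t"
    using L by (intro XL_shift_cube_tau[OF y]) auto
  moreover have "XL L' (tau d y \<omega>) t = translate y ` XL L \<omega> t"
    unfolding L'_def using L by (intro XL_shift_cube_tau[OF y]) auto
  ultimately show "1 + betti d q (XL (L - Lbox d x K) \<omega> t) \<le> betti d q (XL L \<omega> t)"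
    using betti_translate[OF y] by simp
qed

definition grid_point :: "nat \<Rightarrow> nat list \<Rightarrow> int list" where
  "grid_point K js = map (\<lambda>j. int (2 * K + 1) * int j) js"

definition grid_indices :: "nat \<Rightarrow> nat \<Rightarrow> nat list set" where
  "grid_indices d M = {js. set js \<subseteq> {..<M} \<and> length js = d}"

lemma finite_grid_indices: "finite (grid_indices d M)"
  unfolding grid_indices_def by (rule finite_lists_length_eq) simp

lemma card_grid_indices: "card (grid_indices d M) = M ^ d"
  unfolding grid_indices_def by (subst card_lists_length_eq) simp_all

lemma inj_grid_point: "inj (grid_point K)"
  unfolding grid_point_def by (intro inj_mapI injI) simp

lemma length_grid_point[simp]: "length (grid_point K js) = length js"
  by (simp add: grid_point_def)

lemma Lbox_subset_Lbox_origin: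
  assumes "\<And>i. i < d \<Longrightarrow> - int n \<le> x!i - int K \<and> x!i + int K \<le> int n"
  shows "Lbox d x K \<subseteq> Lbox d (replicate d 0) n"
  using assms by (fastforce simp: mem_Lbox_iff)

lemma Lbox_disjoint:
  assumes "i < d" "2 * int K < \<bar>x!i - y!i\<bar>"
  shows "Lbox d x K \<inter> Lbox d y K = {}"
  using assms by (force simp: mem_Lbox_iff split: if_splits)

lemma Lbox_grid_point_subset:
  assumes js: "js \<in> grid_indices d M"
  shows "Lbox d (grid_point K js) K \<subseteq> Lbox d (replicate d 0) ((2 * K + 1) * M)"
proof (rule Lbox_subset_Lbox_origin)
  fix i assume i: "i < d"
  then have "js!i \<in> set js" using js by (simp add: grid_indices_def)
  then have "js!i < M" using js by (auto simp: grid_indices_def)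
  then have "(2 * K + 1) * js!i + K \<le> (2 * K + 1) * M" "K \<le> (2 * K + 1) * M"
    using mult_le_mono2[of "Suc (js!i)" M "2 * K + 1"] by simp_all
  then have "int ((2 * K + 1) * js!i) + int K \<le> int ((2 * K + 1) * M)" "int K \<le> int ((2 * K + 1) * M)"
    by (simp_all only: of_nat_le_iff flip: of_nat_add)
  moreover have "grid_point K js ! i = int ((2 * K + 1) * js!i)"
    using i js by (simp add: grid_point_def grid_indices_def algebra_simps)
  ultimately show "- int ((2 * K + 1) * M) \<le> grid_point K js ! i - int K \<and>
      grid_point K js ! i + int K \<le> int ((2 * K + 1) * M)"
    by linarith
qed

lemma Lbox_grid_point_disjoint:
  assumes "js \<in> grid_indices d M" "js' \<in> grid_indices d M" "js \<noteq> js'"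
  shows "Lbox d (grid_point K js) K \<inter> Lbox d (grid_point K js') K = {}"
proof -
  obtain i where i: "i < d" "js!i \<noteq> js'!i"
    using assms nth_equalityI[of js js'] by (auto simp: grid_indices_def)
  have "grid_point K js ! i - grid_point K js' ! i = (2 * int K + 1) * (int (js!i) - int (js'!i))"
    using i(1) assms(1,2) by (simp add: grid_point_def grid_indices_def algebra_simps)
  then have eq: "\<bar>grid_point K js ! i - grid_point K js' ! i\<bar> = (2 * int K + 1) * \<bar>int (js!i) - int (js'!i)\<bar>"
    by (simp add: abs_mult)
  have "2 * int K < (2 * int K + 1) * 1" by simp
  also have "\<dots> \<le> (2 * int K + 1) * \<bar>int (js!i) - int (js'!i)\<bar>"
    using i(2) by (intro mult_left_mono) simp_all
  finally have "2 * int K < \<bar>grid_point K js ! i - grid_point K js' ! i\<bar>" unfolding eq .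
  then show ?thesis by (rule Lbox_disjoint[OF i(1)])
qed

lemma card_pivotal_grid_le:
  fixes K M :: nat
  defines "n \<equiv> (2 * K + 1) * M"
  shows "card {js \<in> grid_indices d M. betti_pivotal d q K \<omega> t (grid_point K js)}
    \<le> betti d q (Xt d \<omega> t \<inter> Lambda d n) + 2 * d * (2 * (2 * n + 1)) ^ (d - 1)"
proof -
  define G where "G = grid_point K ` {js \<in> grid_indices d M. betti_pivotal d q K \<omega> t (grid_point K js)}"
  define Y where "Y = Xt d \<omega> t \<inter> Lambda d n"
  define A where "A = XL (Lbox d (replicate d 0) n) \<omega> t"
  have "card {js \<in> grid_indices d M. betti_pivotal d q K \<omega> t (grid_point K js)} = card G"
    unfolding G_def by (intro card_image[symmetric] inj_on_subset[OF inj_grid_point]) simp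
  also have "\<dots> \<le> betti d q A"
    unfolding A_def
  proof (rule card_le_betti_of_pivotal)
    show "finite G" unfolding G_def using finite_grid_indices by simp
    show "\<forall>x\<in>G. betti_pivotal d q K \<omega> t x" by (auto simp: G_def)
    show "\<forall>x\<in>G. Lbox d x K \<subseteq> Lbox d (replicate d 0) n"
      unfolding G_def n_def using Lbox_grid_point_subset by blast
    show "\<forall>x\<in>G. \<forall>y\<in>G. x \<noteq> y \<longrightarrow> Lbox d x K \<inter> Lbox d y K = {}"
      unfolding G_def using Lbox_grid_point_disjoint by blast
    show "finite (Lbox d (replicate d 0) n)" by (rule finite_Lbox)
    show "Lbox d (replicate d 0) n \<subseteq> cubesK d" by (auto simp: Lbox_def)
  qed
  also have "\<dots> \<le> betti d q Y + card (elem_cubes d (Suc q) Y - elem_cubes d (Suc q) A)"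
    unfolding A_def Y_def
    by (intro betti_le_add_new_cells XL_Lbox_subset_Xt_Lambda finite_elem_cubes_subset_box)
      (auto simp: Lambda_def)
  also have "card (elem_cubes d (Suc q) Y - elem_cubes d (Suc q) A) \<le> card (faces_on_boundary d n)"
    unfolding Y_def A_def using finite_Lbox[of d "replicate d 0" n]
    by (intro card_mono new_cells_subset_faces_on_boundary) (auto simp: faces_on_boundary_def)
  finally show ?thesis unfolding Y_def using card_faces_on_boundary_le[of d n] by linarith
qed

section \<open>Probabilistic estimates\<close>

lemma (in prob_space) reverse_markov_inequality:
  assumes X: "integrable M X" and le: "\<And>x. x \<in> space M \<Longrightarrow> X x \<le> c" and a: "0 \<le> a"
  shows "expectation X \<le> c * prob {x \<in> space M. a \<le> X x} + a"
proof -
  define A where "A = {x \<in> space M. a \<le> X x}"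
  have A: "A \<in> events" unfolding A_def using borel_measurable_integrable[OF X] by measurable
  have "X x \<le> c * indicator A x + a" if "x \<in> space M" for x
    using le[OF that] a that by (auto simp: A_def indicator_def)
  moreover have intA: "integrable M (indicator A :: 'a \<Rightarrow> real)"
    using A by (simp add: integrable_indicator_iff Int_absorb2 sets.sets_into_space less_top[symmetric])
  ultimately have "expectation X \<le> expectation (\<lambda>x. c * indicator A x + a)"
    using X by (intro integral_mono Bochner_Integration.integrable_add integrable_mult_right) auto
  also have "\<dots> = c * expectation (indicator A) + a"
    using intA by (subst Bochner_Integration.integral_add) (auto simp: prob_space)
  also have "expectation (indicator A) = prob A"
    using A by (simp add: Int_absorb2 sets.sets_into_space)
  finally show ?thesis unfolding A_def .
qed

lemma (in prob_space) prob_limsup_ge: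
  assumes A: "\<And>n. A n \<in> events" and \<delta>: "\<And>n. \<delta> \<le> prob (A n)"
  shows "\<delta> \<le> prob (limsup A)"
proof -
  define U where "U n = (\<Union>k\<in>{n..}. A k)" for n
  have U: "U n \<in> events" for n unfolding U_def using A by blast
  have "decseq U" by (rule decseq_SucI) (force simp: U_def dest: Suc_leD)
  then have "(\<lambda>n. prob (U n)) \<longlonglongrightarrow> prob (\<Inter>n. U n)"
    using U by (intro finite_Lim_measure_decseq) auto
  moreover have "\<delta> \<le> prob (U n)" for n
    using \<delta>[of n] finite_measure_mono[of "A n" "U n"] U by (force simp: U_def)
  ultimately have "\<delta> \<le> prob (\<Inter>n. U n)" by (intro LIMSEQ_le_const) auto
  then show ?thesis by (simp add: limsup_INF_SUP U_def)
qed

lemma (in prob_space) not_AE_eventually_below_half_mean: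
  fixes X :: "nat \<Rightarrow> 'a \<Rightarrow> real" and c :: "nat \<Rightarrow> real"
  assumes X: "\<And>n. integrable M (X n)" and le: "\<And>n x. x \<in> space M \<Longrightarrow> X n x \<le> c n"
    and c: "\<And>n. 0 < c n" and mean: "\<And>n. p * c n \<le> expectation (X n)" and p: "0 < p"
  shows "\<not> (AE x in M. \<forall>\<^sub>F n in sequentially. X n x < p * c n / 2)"
proof
  define A where "A n = {x \<in> space M. p * c n / 2 \<le> X n x}" for n
  have A: "A n \<in> events" for n
    unfolding A_def using borel_measurable_integrable[OF X] by measurable
  have "p / 2 \<le> prob (A n)" for n
  proof -
    have "0 \<le> p * c n / 2" using c[of n] p by simp
    from reverse_markov_inequality[OF X[of n] le[of _ n] this]
    have "expectation (X n) \<le> c n * prob (A n) + p * c n / 2" unfolding A_def .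
    then have "c n * (p / 2) \<le> c n * prob (A n)" using mean[of n] by (simp add: algebra_simps)
    then show ?thesis using c[of n] by simp
  qed
  then have "p / 2 \<le> prob (limsup A)" by (rule prob_limsup_ge[OF A])
  moreover assume "AE x in M. \<forall>\<^sub>F n in sequentially. X n x < p * c n / 2"
  then have "AE x in M. x \<notin> limsup A"
    by eventually_elim (auto simp: mem_limsup_iff A_def not_frequently elim: eventually_mono)
  then have "limsup A \<in> null_sets M"
    using AE_iff_null_sets[of "limsup A" M] A by (simp add: measurable_limsup)
  ultimately show False using p by (simp add: measure_def null_setsD1)
qed

lemma (in prob_space) expectation_sum_indicator:
  assumes I: "finite I" and E: "\<And>i. i \<in> I \<Longrightarrow> E i \<in> events \<and> prob (E i) = p"
  shows "integrable M (\<lambda>x. \<Sum>i\<in>I. indicator (E i) x :: real)"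
    and "expectation (\<lambda>x. \<Sum>i\<in>I. indicator (E i) x) = real (card I) * p"
proof -
  have int: "integrable M (indicator (E i) :: 'a \<Rightarrow> real)" if "i \<in> I" for i
    using E[OF that] by (simp add: integrable_indicator_iff Int_absorb2 sets.sets_into_space less_top[symmetric])
  then show "integrable M (\<lambda>x. \<Sum>i\<in>I. indicator (E i) x :: real)" by auto
  have "expectation (\<lambda>x. \<Sum>i\<in>I. indicator (E i) x) = (\<Sum>i\<in>I. expectation (indicator (E i)) :: real)"
    using int by (rule Bochner_Integration.integral_sum)
  also have "\<dots> = (\<Sum>i\<in>I. p)"
    using E by (intro sum.cong) (simp_all add: Int_absorb2 sets.sets_into_space)
  finally show "expectation (\<lambda>x. \<Sum>i\<in>I. indicator (E i) x) = real (card I) * p" by simp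
qed

lemma sum_indicator_le_card:
  assumes "finite I" and "\<And>i. i \<in> I \<Longrightarrow> x \<in> E i \<Longrightarrow> Q i"
  shows "(\<Sum>i\<in>I. indicator (E i) x :: real) \<le> real (card {i \<in> I. Q i})"
proof -
  have "(\<Sum>i\<in>I. indicator (E i) x :: real) \<le> (\<Sum>i\<in>I. of_bool (Q i))"
    using assms(2) by (intro sum_mono) (auto simp: indicator_def)
  also have "\<dots> = real (card {i \<in> I. Q i})"
    using assms(1) by (simp add: sum.If_cases Int_def)
  finally show ?thesis .
qed

context
  fixes P :: "(cube \<Rightarrow> real) measure" and d :: nat
  assumes prob_P: "prob_space P" and sets_P: "sets P = sets (OmegaM d)"
    and stationary: "\<forall>x. length x = d \<longrightarrow> distr P P (tau d x) = P"
begin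

lemma measurable_tau: "length y = d \<Longrightarrow> tau d y \<in> measurable P P"
  unfolding measurable_cong_sets[OF sets_P sets_P] OmegaM_def tau_def
  by (intro measurable_restrict measurable_component_singleton) (simp add: cubesK_def)

lemma measure_vimage_tau:
  assumes y: "length y = d" and A: "A \<in> sets P"
  shows "tau d y -` A \<inter> space P \<in> sets P" "measure P (tau d y -` A \<inter> space P) = measure P A"
proof -
  show "tau d y -` A \<inter> space P \<in> sets P" using measurable_tau[OF y] A by (rule measurable_sets)
  have "measure (distr P P (tau d y)) A = measure P (tau d y -` A \<inter> space P)"
    by (rule measure_distr[OF measurable_tau[OF y] A])
  then show "measure P (tau d y -` A \<inter> space P) = measure P A" using stationary y by simp
qed

lemma not_AE_eventually_few_pivotal:
  fixes q K :: nat and t :: real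
  defines "p \<equiv> measure P (Omega_q d q (replicate d 0) K t)"
  assumes p: "0 < p"
  shows "\<not> (AE \<omega> in P. \<forall>\<^sub>F M in sequentially.
    real (card {js \<in> grid_indices d (Suc M). betti_pivotal d q K \<omega> t (grid_point K js)})
      < p * real (Suc M) ^ d / 2)"
proof
  interpret prob_space P by (rule prob_P)
  define Om where "Om = Omega_q d q (replicate d 0) K t"
  define E where "E x = tau d (map uminus x) -` Om \<inter> space P" for x
  have Om: "Om \<in> events" using p measure_notin_sets[of Om P] by (fastforce simp: p_def Om_def)
  have E: "E (grid_point K js) \<in> events \<and> prob (E (grid_point K js)) = p"
    if "js \<in> grid_indices d M" for js M
    using that measure_vimage_tau[of "map uminus (grid_point K js)", OF _ Om]
    by (simp add: E_def p_def Om_def grid_indices_def)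
  define N where "N M \<omega> = (\<Sum>js\<in>grid_indices d (Suc M). indicator (E (grid_point K js)) \<omega> :: real)" for M \<omega>
  have N_le_card: "N M \<omega> \<le> real (card {js \<in> grid_indices d (Suc M). betti_pivotal d q K \<omega> t (grid_point K js)})"
    for M \<omega>
    unfolding N_def using finite_grid_indices
    by (rule sum_indicator_le_card) (auto simp: E_def Om_def grid_indices_def intro: betti_pivotal_if_tau_in_Omega_q)
  have "N M \<omega> \<le> real (card {js \<in> grid_indices d (Suc M). True})" for M \<omega>
    unfolding N_def using finite_grid_indices by (rule sum_indicator_le_card) simp
  then have "N M \<omega> \<le> real (Suc M) ^ d" for M \<omega> by (simp add: card_grid_indices)
  moreover have "integrable P (N M)" "p * real (Suc M) ^ d \<le> expectation (N M)" for M
    using expectation_sum_indicator[OF finite_grid_indices E] unfolding N_def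
    by (simp_all add: card_grid_indices)
  ultimately have "\<not> (AE \<omega> in P. \<forall>\<^sub>F M in sequentially. N M \<omega> < p * real (Suc M) ^ d / 2)"
    using p by (intro not_AE_eventually_below_half_mean) auto
  moreover assume "AE \<omega> in P. \<forall>\<^sub>F M in sequentially.
    real (card {js \<in> grid_indices d (Suc M). betti_pivotal d q K \<omega> t (grid_point K js)})
      < p * real (Suc M) ^ d / 2"
  then have "AE \<omega> in P. \<forall>\<^sub>F M in sequentially. N M \<omega> < p * real (Suc M) ^ d / 2"
  proof (rule eventually_mono)
    fix \<omega> assume "\<forall>\<^sub>F M in sequentially.
      real (card {js \<in> grid_indices d (Suc M). betti_pivotal d q K \<omega> t (grid_point K js)})
        < p * real (Suc M) ^ d / 2"
    then show "\<forall>\<^sub>F M in sequentially. N M \<omega> < p * real (Suc M) ^ d / 2"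
      by (rule eventually_mono) (rule le_less_trans[OF N_le_card])
  qed
  ultimately show False by contradiction
qed

end

section \<open>Positive density\<close>

lemma density_limit_pos:
  fixes a :: "nat \<Rightarrow> real" and r :: "nat \<Rightarrow> nat"
  assumes lim: "(\<lambda>n. a n / (2 * real n) ^ d) \<longlonglongrightarrow> b" and r: "filterlim r sequentially sequentially"
    and freq: "\<exists>\<^sub>F M in sequentially. c * real (r M) ^ d \<le> a (r M) + D * real (r M) ^ (d - 1)"
    and c: "0 < c" and d: "1 \<le> d"
  shows "0 < b"
proof (rule ccontr)
  assume "\<not> 0 < b"
  define g where "g n = 2 ^ d * (a n / (2 * real n) ^ d) + D / real n" for n
  have "g \<longlonglongrightarrow> 2 ^ d * b + 0" unfolding g_def by (intro tendsto_intros lim)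
  moreover have "2 ^ d * b \<le> 0" using \<open>\<not> 0 < b\<close> by (intro mult_nonneg_nonpos) auto
  then have "2 ^ d * b + 0 < c" using c by simp
  ultimately have "\<forall>\<^sub>F n in sequentially. g n < c \<and> 1 \<le> n"
    by (intro eventually_conj order_tendstoD(2) eventually_ge_at_top)
  from eventually_compose_filterlim[OF this r] freq
  have "\<exists>\<^sub>F M in sequentially. (c * real (r M) ^ d \<le> a (r M) + D * real (r M) ^ (d - 1))
      \<and> g (r M) < c \<and> 1 \<le> r M"
    by (rule frequently_eventually_frequently[rotated])
  then obtain n where n: "c * real n ^ d \<le> a n + D * real n ^ (d - 1)" "g n < c" "1 \<le> n"
    by (auto dest: frequently_ex)
  have pos: "0 < real n ^ d" using n(3) by simp
  have "real n ^ d = real n * real n ^ (d - 1)" using d by (simp flip: power_Suc)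
  then have "g n = (a n + D * real n ^ (d - 1)) / real n ^ d"
    using n(3) by (simp add: g_def power_mult_distrib add_divide_distrib)
  moreover have "c \<le> (a n + D * real n ^ (d - 1)) / real n ^ d"
    using n(1) pos by (simp add: pos_le_divide_eq)
  ultimately show False using n(2) by simp
qed

lemma faces_count_le_power:
  assumes "1 \<le> n"
  shows "real (2 * d * (2 * (2 * n + 1)) ^ (d - 1)) \<le> real (2 * d * 6 ^ (d - 1)) * real n ^ (d - 1)"
proof -
  have "(2 * (2 * n + 1)) ^ (d - 1) \<le> (6 * n) ^ (d - 1)" using assms by (intro power_mono) simp_all
  then show ?thesis by (simp flip: of_nat_power of_nat_mult add: power_mult_distrib)
qed

lemma betti_ge_pivotal_density:
  fixes K M :: nat
  defines "n \<equiv> (2 * K + 1) * Suc M"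
  assumes "p * real (Suc M) ^ d / 2
    \<le> real (card {js \<in> grid_indices d (Suc M). betti_pivotal d q K \<omega> t (grid_point K js)})"
  shows "p / (2 * real (2 * K + 1) ^ d) * real n ^ d
    \<le> real (betti d q (Xt d \<omega> t \<inter> Lambda d n)) + real (2 * d * 6 ^ (d - 1)) * real n ^ (d - 1)"
proof -
  have "real n ^ d = real (2 * K + 1) ^ d * real (Suc M) ^ d"
    by (simp only: n_def of_nat_mult power_mult_distrib)
  then have "p / (2 * real (2 * K + 1) ^ d) * real n ^ d = p * real (Suc M) ^ d / 2" by simp
  moreover have "real (card {js \<in> grid_indices d (Suc M). betti_pivotal d q K \<omega> t (grid_point K js)})
      \<le> real (betti d q (Xt d \<omega> t \<inter> Lambda d n)) + real (2 * d * (2 * (2 * n + 1)) ^ (d - 1))"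
    using card_pivotal_grid_le[of d "Suc M" q K \<omega> t] unfolding n_def
    by (simp only: of_nat_le_iff flip: of_nat_add)
  moreover have "real (2 * d * (2 * (2 * n + 1)) ^ (d - 1)) \<le> real (2 * d * 6 ^ (d - 1)) * real n ^ (d - 1)"
    by (rule faces_count_le_power) (simp add: n_def)
  ultimately show ?thesis using assms(2) by linarith
qed

lemma eventually_not_eventually_ex: "eventually P F \<Longrightarrow> \<not> eventually R F \<Longrightarrow> \<exists>x. P x \<and> \<not> R x"
  by (metis eventually_mono)

theorem proposition3p5:
  fixes d q K :: nat and P :: "(cube \<Rightarrow> real) measure" and t beta_hat :: real
  assumes "prob_space P"
    and "sets P = sets (OmegaM d)"
    and stationary: "\<forall>x. length x = d \<longrightarrow> distr P P (tau d x) = P"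
    and ergodic: "\<forall>A\<in>sets P. (\<forall>x. length x = d \<longrightarrow> tau d x -` A \<inter> space P = A)
                       \<longrightarrow> measure P A = 0 \<or> measure P A = 1"
    and "q < d"
    and "0 \<le> t" and "t \<le> 1"
    and limit: "AE \<omega> in P. (\<lambda>n. real (betti d q (Xt d \<omega> t \<inter> Lambda d n)) / (2 * real n) ^ d)
                    \<longlonglongrightarrow> beta_hat"
    and "0 < K"
    and "measure P (Omega_q d q (replicate d 0) K t) > 0"
  shows "beta_hat > 0"
proof -
  define p where "p = measure P (Omega_q d q (replicate d 0) K t)"
  define r where "r M = (2 * K + 1) * Suc M" for M
  have p: "0 < p" using assms(10) by (simp add: p_def)
  from eventually_not_eventually_ex[OF limit not_AE_eventually_few_pivotal[OF assms(1-3) p[unfolded p_def]]]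
  obtain \<omega> where conv: "(\<lambda>n. real (betti d q (Xt d \<omega> t \<inter> Lambda d n)) / (2 * real n) ^ d) \<longlonglongrightarrow> beta_hat"
    and many: "\<exists>\<^sub>F M in sequentially. p * real (Suc M) ^ d / 2
      \<le> real (card {js \<in> grid_indices d (Suc M). betti_pivotal d q K \<omega> t (grid_point K js)})"
    unfolding p_def[symmetric] not_eventually not_less by blast
  from many have freq: "\<exists>\<^sub>F M in sequentially. p / (2 * real (2 * K + 1) ^ d) * real (r M) ^ d
      \<le> real (betti d q (Xt d \<omega> t \<inter> Lambda d (r M))) + real (2 * d * 6 ^ (d - 1)) * real (r M) ^ (d - 1)"
    unfolding r_def by (rule frequently_elim1) (rule betti_ge_pivotal_density)
  have r: "filterlim r sequentially sequentially"
    unfolding r_def by (intro filterlim_subseq strict_monoI mult_strict_left_mono) simp_all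
  show ?thesis using p \<open>q < d\<close> by (intro density_limit_pos[OF conv r freq]) simp_all
qed

end
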